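(* Let $(u,\Psi)\in C^2(B_r)\times C^2(\Gamma(\Sigma B_r))$ be a solution of \begin{equation*} \left\{ \begin{array}{rcl} -\Delta u(x) &=& 2V^2(x)|x|^{2\alpha}e^{2u(x)}-V(x)|x|^{\alpha}e^{u(x)}|\Psi|^2 \\ \not{D}\Psi &=& -V(x)|x|^{\alpha}e^{u(x)}\Psi \end{array} \text { in } B_{r}(0), \right. \end{equation*} with $\int_{B_r(0)}|x|^{2\alpha}e^{2u}+|\Psi|^4dx<+\infty$. Then, for any $0<R<r$, the Pohozaev type identity \begin{eqnarray*} &&R\int_{\partial B_R(0)} |\frac {\partial u}{\partial \nu}|^2-\frac 12|\nabla u|^2d\sigma \\ &=&(1+\alpha)\int_{B_R(0)}(2V^2(x)|x|^{2\alpha}e^{2u}-V(x)|x|^{\alpha}e^u|\Psi|^2)dx \\ & & -R\int_{\partial B_R(0)}V^2(x)|x|^{2\alpha}e^{2u}d\sigma+\frac 12\int_{\partial B_R(0)}(\langle\frac {\partial \Psi}{\partial \nu}, x\cdot\Psi\rangle +\langle x\cdot\Psi, \frac {\partial \Psi}{\partial \nu}\rangle ) d\sigma \\ & & +\int_{B_R(0)}(|x|^{2\alpha}e^{2u}x\cdot\nabla (V^2(x))-|x|^{\alpha}e^u|\Psi|^2x\cdot \nabla V(x))dx \end{eqnarray*} holds, where $\nu$ is the outward normal vector of $\partial B_R(0)$.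
   Context: $\alpha\ge 0$, $V$ is a $C^{1,\beta}$ function with $0<a\le V\le b$, $B_r=B_r(0)\subset\mathbb{R}^2$. Spinors are maps to $\mathbb{C}^2$ and $\not{D}$ is the standard Dirac operator on $\mathbb{R}^2$: for $\Psi=(f,g)^T$, $\not{D}\Psi = 2(\partial_{\bar z} g, -\partial_z f)^T$. For $x=x_1e_1+x_2e_2$, $x\cdot\Psi$ denotes Clifford multiplication, where $e_1,e_2$ act on spinors by the matrices $e_1=\begin{pmatrix}0&1\\-1&0\end{pmatrix}$, $e_2=\begin{pmatrix}0&i\\i&0\end{pmatrix}$. *)

theory Defs
  imports "HOL-Analysis.Analysis"
begin

text \<open>Points of R^2 are modelled as complex numbers x = x1 + i x2 (x1 = Re x, x2 = Im x).
Spinors are elements of C^2, modelled as complex \<times> complex (norm = sqrt(|f|^2+|g|^2)).\<close>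

definition d1 :: "(complex \<Rightarrow> 'b::real_normed_vector) \<Rightarrow> complex \<Rightarrow> 'b" where
  "d1 f x = frechet_derivative f (at x) 1"

definition d2 :: "(complex \<Rightarrow> 'b::real_normed_vector) \<Rightarrow> complex \<Rightarrow> 'b" where
  "d2 f x = frechet_derivative f (at x) \<i>"

definition C1_on :: "complex set \<Rightarrow> (complex \<Rightarrow> 'b::real_normed_vector) \<Rightarrow> bool" where
  "C1_on S f \<longleftrightarrow> open S \<and> f differentiable_on S \<and>
     continuous_on S (d1 f) \<and> continuous_on S (d2 f)"

definition C2_on :: "complex set \<Rightarrow> (complex \<Rightarrow> 'b::real_normed_vector) \<Rightarrow> bool" where
  "C2_on S f \<longleftrightarrow> C1_on S f \<and> C1_on S (d1 f) \<and> C1_on S (d2 f)"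

definition C1_holder_on :: "real \<Rightarrow> complex set \<Rightarrow> (complex \<Rightarrow> real) \<Rightarrow> bool" where
  "C1_holder_on \<beta> S f \<longleftrightarrow> C1_on S f \<and>
     (\<exists>C. \<forall>x\<in>S. \<forall>y\<in>S. \<bar>d1 f x - d1 f y\<bar> \<le> C * dist x y powr \<beta> \<and>
                         \<bar>d2 f x - d2 f y\<bar> \<le> C * dist x y powr \<beta>)"

definition grad :: "(complex \<Rightarrow> real) \<Rightarrow> complex \<Rightarrow> complex" where
  "grad f x = Complex (d1 f x) (d2 f x)"

definition laplacian :: "(complex \<Rightarrow> real) \<Rightarrow> complex \<Rightarrow> real" where
  "laplacian f x = d1 (d1 f) x + d2 (d2 f) x"

definition dz :: "(complex \<Rightarrow> complex) \<Rightarrow> complex \<Rightarrow> complex" where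
  "dz f x = (d1 f x - \<i> * d2 f x) / 2"

definition dzbar :: "(complex \<Rightarrow> complex) \<Rightarrow> complex \<Rightarrow> complex" where
  "dzbar f x = (d1 f x + \<i> * d2 f x) / 2"

definition dirac :: "(complex \<Rightarrow> complex \<times> complex) \<Rightarrow> complex \<Rightarrow> complex \<times> complex" where
  "dirac \<Psi> x = (2 * dzbar (\<lambda>y. snd (\<Psi> y)) x, - 2 * dz (\<lambda>y. fst (\<Psi> y)) x)"

text \<open>Clifford multiplication x\<cdot>\<psi> = x1 e1 \<psi> + x2 e2 \<psi>, with
 e1 = [[0,1],[-1,0]], e2 = [[0,i],[i,0]].\<close>
definition clifford :: "complex \<Rightarrow> complex \<times> complex \<Rightarrow> complex \<times> complex" where
  "clifford x \<psi> = (let (f, g) = \<psi> in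
      (of_real (Re x) * g + of_real (Im x) * (\<i> * g),
       of_real (Re x) * (- f) + of_real (Im x) * (\<i> * f)))"

definition herm :: "complex \<times> complex \<Rightarrow> complex \<times> complex \<Rightarrow> complex" where
  "herm \<phi> \<psi> = fst \<phi> * cnj (fst \<psi>) + snd \<phi> * cnj (snd \<psi>)"

definition normal_deriv :: "(complex \<Rightarrow> 'b::real_normed_vector) \<Rightarrow> complex \<Rightarrow> 'b" where
  "normal_deriv f x = frechet_derivative f (at x) (sgn x)"

text \<open>t^a for t \<ge> 0 with the convention t^0 = 1 (also at t = 0).\<close>
definition rpow :: "real \<Rightarrow> real \<Rightarrow> real" where
  "rpow t a = (if a = 0 then 1 else t powr a)"

text \<open>Integral over the circle of radius R with respect to arc length d\<sigma>.\<close>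
definition circle_integral :: "real \<Rightarrow> (complex \<Rightarrow> 'b::euclidean_space) \<Rightarrow> 'b" where
  "circle_integral R F = integral {0..2*pi} (\<lambda>t. R *\<^sub>R F (of_real R * cis t))"

end

theory Submission
  imports Defs
begin

text \<open>In polar coordinates \<open>x = \<rho> e\<^sup>i\<^sup>t\<close> the Pohozaev identity is the integrated form of a
  divergence identity: there are functions \<open>G\<close> and \<open>H\<close> of \<open>(\<rho>, t)\<close>, with \<open>G(0, t) = 0\<close> and \<open>H\<close>
  \<open>2\<pi>\<close>-periodic in \<open>t\<close>, such that \<open>\<partial>\<^sub>\<rho>G + \<partial>\<^sub>tH = \<rho> \<Phi>(\<rho> e\<^sup>i\<^sup>t)\<close>, where \<open>\<Phi>\<close> is the volume
  integrand. Integrating over \<open>[0, R] \<times> [0, 2\<pi>]\<close> leaves \<open>\<integral> G(R, t) dt\<close>, which is the boundary side.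
  Each of \<open>G\<close> and \<open>H\<close> is a sum of three fluxes. The scalar one, \<open>\<rho>\<^sup>2(u\<^sub>\<nu>\<^sup>2 - u\<^sub>\<tau>\<^sup>2)/2\<close> and
  \<open>\<rho> u\<^sub>\<nu> u\<^sub>\<tau>\<close>, has divergence \<open>\<rho>\<^sup>2 u\<^sub>\<nu> \<Delta>u\<close> (this uses the symmetry of second derivatives).
  The weight flux \<open>\<rho>\<^sup>2 (\<rho>\<^sup>2\<^sup>\<alpha> V\<^sup>2 e\<^sup>2\<^sup>u - \<rho>\<^sup>\<alpha> V e\<^sup>u |\<Psi>|\<^sup>2)\<close> produces the terms with \<open>1 + \<alpha>\<close>
  and \<open>x\<cdot>\<nabla>V\<close>. The spinor flux is built from the pairing \<open>\<langle>\<tau>\<cdot>\<partial>\<Psi>, \<Psi>\<rangle>\<close> of Clifford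
  multiplication by the unit tangent \<open>\<tau>\<close>; by the Dirac equation its divergence is
  \<open>\<rho> h |\<Psi>|\<^sup>2 + \<rho>\<^sup>2 h \<partial>\<^sub>\<rho>|\<Psi>|\<^sup>2\<close> with \<open>h = V |x|\<^sup>\<alpha> e\<^sup>u\<close>, which cancels the remaining terms, and
  on the circle it combines with the weight flux into \<open>\<langle>\<partial>\<^sub>\<nu>\<Psi>, x\<cdot>\<Psi>\<rangle>\<close>.\<close>

section \<open>Integration in polar coordinates\<close>

lemma has_integral_linear_transport_cbox:
  fixes g :: "'a::euclidean_space \<Rightarrow> 'b::euclidean_space" and h :: "'b \<Rightarrow> 'a"
    and f :: "'b \<Rightarrow> 'c::banach"
  assumes hg: "\<And>x. h (g x) = x" and gh: "\<And>y. g (h y) = y"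
    and lin: "linear g"
    and g_box: "\<And>u v. \<exists>w z. g ` cbox u v = cbox w z"
    and h_box: "\<And>u v. \<exists>w z. h ` cbox u v = cbox w z"
    and content: "\<And>u v. Henstock_Kurzweil_Integration.content (g ` cbox u v) = Henstock_Kurzweil_Integration.content (cbox u v)"
    and f: "(f has_integral i) (cbox a b)"
  shows "((\<lambda>x. f (g x)) has_integral i) (h ` cbox a b)"
proof -
  have "\<And>x. isCont g x"
    using lin by (simp add: linear_continuous_at linear_conv_bounded_linear)
  from has_integral_twiddle[of 1 h g, OF _ hg gh this g_box h_box _ f] content
  show ?thesis by simp
qed

lemma has_integral_linear_transport:
  fixes g :: "'a::euclidean_space \<Rightarrow> 'b::euclidean_space" and h :: "'b \<Rightarrow> 'a"
    and f :: "'b \<Rightarrow> 'c::banach"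
  assumes hg: "\<And>x. h (g x) = x" and gh: "\<And>y. g (h y) = y"
    and lin: "linear g"
    and g_box: "\<And>u v. \<exists>w z. g ` cbox u v = cbox w z"
    and h_box: "\<And>u v. \<exists>w z. h ` cbox u v = cbox w z"
    and content: "\<And>u v. Henstock_Kurzweil_Integration.content (g ` cbox u v) = Henstock_Kurzweil_Integration.content (cbox u v)"
    and S: "S \<subseteq> cbox a b"
    and f: "(f has_integral i) S"
  shows "((\<lambda>x. f (g x)) has_integral i) (h ` S)"
proof -
  have "((\<lambda>x. if x \<in> S then f x else 0) has_integral i) (cbox a b)"
    using S f by simp
  from has_integral_linear_transport_cbox[OF hg gh lin g_box h_box content this]
  have "((\<lambda>x. if g x \<in> S then f (g x) else 0) has_integral i) (h ` cbox a b)" .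
  moreover have "(\<lambda>x. if g x \<in> S then f (g x) else 0) = (\<lambda>x. if x \<in> h ` S then f (g x) else 0)"
    using hg gh by (auto simp: image_iff) (metis)+
  moreover have "h ` S \<subseteq> h ` cbox a b" using S by auto
  ultimately show ?thesis by simp
qed

lemma mem_cbox_vec2:
  "(x::real^2) \<in> cbox u v \<longleftrightarrow> u$1 \<le> x$1 \<and> x$1 \<le> v$1 \<and> u$2 \<le> x$2 \<and> x$2 \<le> v$2"
  by (auto simp: mem_box_cart forall_2)

lemma mem_cbox_pair:
  "(x::real \<times> real) \<in> cbox (a,c) (b,d) \<longleftrightarrow> a \<le> fst x \<and> fst x \<le> b \<and> c \<le> snd x \<and> snd x \<le> d"
  by (cases x) (simp add: cbox_Pair_eq[symmetric] mem_Times_iff)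

lemma mem_cbox_complex:
  "(x::complex) \<in> cbox a b \<longleftrightarrow> Re a \<le> Re x \<and> Re x \<le> Re b \<and> Im a \<le> Im x \<and> Im x \<le> Im b"
  by (auto simp: mem_box Basis_complex_def)

definition vec2 :: "real \<times> real \<Rightarrow> real^2" where
  "vec2 p = vector [fst p, snd p]"

definition unvec2 :: "real^2 \<Rightarrow> real \<times> real" where
  "unvec2 v = (v$1, v$2)"

lemma vec2_unvec2 [simp]: "vec2 (unvec2 v) = v"
  by (simp add: vec2_def unvec2_def vec_eq_iff forall_2)

lemma unvec2_vec2 [simp]: "unvec2 (vec2 p) = p"
  by (simp add: vec2_def unvec2_def)

lemma vec2_nth [simp]: "vec2 p $ 1 = fst p" "vec2 p $ 2 = snd p"
  by (simp_all add: vec2_def)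

lemma linear_vec2: "linear vec2"
  by (rule linearI) (simp_all add: vec2_def vec_eq_iff forall_2)

lemma vec2_image_cbox: "vec2 ` cbox u v = cbox (vec2 u) (vec2 v)"
proof -
  obtain a c b d where uv: "u = (a,c)" "v = (b,d)" by (cases u; cases v) auto
  have "cbox (vec2 u) (vec2 v) \<subseteq> vec2 ` cbox u v"
  proof
    fix x assume "x \<in> cbox (vec2 u) (vec2 v)"
    then have "unvec2 x \<in> cbox u v" by (auto simp: uv mem_cbox_vec2 unvec2_def mem_cbox_pair)
    then show "x \<in> vec2 ` cbox u v" by (metis image_eqI vec2_unvec2)
  qed
  moreover have "vec2 ` cbox u v \<subseteq> cbox (vec2 u) (vec2 v)"
    by (auto simp: uv mem_cbox_vec2 mem_cbox_pair)
  ultimately show ?thesis by blast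
qed

lemma unvec2_image_cbox: "unvec2 ` cbox u v = cbox (unvec2 u) (unvec2 v)"
proof -
  have "unvec2 ` cbox u v = unvec2 ` vec2 ` cbox (unvec2 u) (unvec2 v)"
    by (simp add: vec2_image_cbox)
  also have "\<dots> = cbox (unvec2 u) (unvec2 v)" by (simp add: image_image)
  finally show ?thesis .
qed

lemma content_vec2_image: "Henstock_Kurzweil_Integration.content (vec2 ` cbox u v) = Henstock_Kurzweil_Integration.content (cbox u v)"
proof (cases u; cases v)
  fix a c b d assume uv: "u = (a,c)" "v = (b,d)"
  have "cbox (vec2 (a,c)) (vec2 (b,d)) = {} \<longleftrightarrow> \<not> (a \<le> b \<and> c \<le> d)"
  proof
    assume "cbox (vec2 (a,c)) (vec2 (b,d)) = {}"
    then have "vec2 (a,c) \<notin> cbox (vec2 (a,c)) (vec2 (b,d))" by simp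
    then show "\<not> (a \<le> b \<and> c \<le> d)" by (auto simp: mem_cbox_vec2)
  qed (auto simp: mem_cbox_vec2)
  then show ?thesis
    unfolding vec2_image_cbox uv content_Pair content_cbox_if_cart
    by (auto simp: UNIV_2)
qed

lemma integral_vec2_cbox_Fubini:
  fixes F :: "real^2 \<Rightarrow> real"
  assumes "continuous_on (cbox (vec2 (a,c)) (vec2 (b,d))) F"
  shows "integral (cbox (vec2 (a,c)) (vec2 (b,d))) F
       = integral {a..b} (\<lambda>x. integral {c..d} (\<lambda>y. F (vec2 (x,y))))"
proof -
  let ?B = "cbox (vec2 (a,c)) (vec2 (b,d))"
  have I: "(F has_integral integral ?B F) ?B"
    using integrable_continuous[OF assms] by (simp add: integrable_integral)
  have vec2_box: "\<exists>w z. vec2 ` cbox u v = cbox w z" for u v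
    by (auto simp: vec2_image_cbox)
  have unvec2_box: "\<exists>w z. unvec2 ` cbox u v = cbox w z" for u v
    by (simp only: unvec2_image_cbox) blast
  from has_integral_linear_transport_cbox[of unvec2 vec2, OF unvec2_vec2 vec2_unvec2 linear_vec2
      vec2_box unvec2_box content_vec2_image I]
  have "((\<lambda>x. F (vec2 x)) has_integral integral ?B F) (cbox (a,c) (b,d))"
    by (auto simp: vec2_image_cbox unvec2_image_cbox)
  then have "integral ?B F = integral (cbox (a,c) (b,d)) (\<lambda>x. F (vec2 x))"
    by (simp add: integral_unique)
  also have "\<dots> = integral (cbox a b) (\<lambda>x. integral (cbox c d) (\<lambda>y. F (vec2 (x,y))))"
    by (rule integral_prod_continuous, rule continuous_on_compose2[OF assms])
       (auto simp: vec2_image_cbox intro: linear_continuous_on linear_vec2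
         linear_conv_bounded_linear[THEN iffD1])
  finally show ?thesis by simp
qed

definition complex_of_vec2 :: "real^2 \<Rightarrow> complex" where
  "complex_of_vec2 v = Complex (v$1) (v$2)"

definition vec2_of_complex :: "complex \<Rightarrow> real^2" where
  "vec2_of_complex z = vec2 (Re z, Im z)"

lemma complex_of_vec2_inverse [simp]: "complex_of_vec2 (vec2_of_complex z) = z"
  by (simp add: complex_of_vec2_def vec2_of_complex_def complex_eq_iff)

lemma vec2_of_complex_inverse [simp]: "vec2_of_complex (complex_of_vec2 v) = v"
  by (simp add: complex_of_vec2_def vec2_of_complex_def vec_eq_iff forall_2)

lemma linear_vec2_of_complex: "linear vec2_of_complex"
  by (rule linearI) (simp_all add: vec2_of_complex_def vec2_def vec_eq_iff forall_2)

lemma linear_complex_of_vec2: "linear complex_of_vec2"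
  by (rule linearI) (simp_all add: complex_of_vec2_def complex_eq_iff)

lemma norm_vec2_of_complex [simp]: "norm (vec2_of_complex z) = norm z"
  by (simp add: vec2_of_complex_def norm_vec_def L2_set_def UNIV_2 cmod_def)

lemma norm_complex_of_vec2 [simp]: "norm (complex_of_vec2 v) = norm v"
  by (metis norm_vec2_of_complex vec2_of_complex_inverse)

lemma vec2_of_complex_image_cbox:
  "vec2_of_complex ` cbox u v = cbox (vec2_of_complex u) (vec2_of_complex v)"
proof -
  have "cbox (vec2_of_complex u) (vec2_of_complex v) \<subseteq> vec2_of_complex ` cbox u v"
  proof
    fix x assume "x \<in> cbox (vec2_of_complex u) (vec2_of_complex v)"
    then have "complex_of_vec2 x \<in> cbox u v"
      by (auto simp: mem_cbox_complex mem_cbox_vec2 complex_of_vec2_def vec2_of_complex_def)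
    then show "x \<in> vec2_of_complex ` cbox u v" by (metis image_eqI vec2_of_complex_inverse)
  qed
  moreover have "vec2_of_complex ` cbox u v \<subseteq> cbox (vec2_of_complex u) (vec2_of_complex v)"
    by (auto simp: mem_cbox_complex mem_cbox_vec2 vec2_of_complex_def)
  ultimately show ?thesis by blast
qed

lemma complex_of_vec2_image_cbox:
  "complex_of_vec2 ` cbox u v = cbox (complex_of_vec2 u) (complex_of_vec2 v)"
proof -
  have "complex_of_vec2 ` cbox u v
      = complex_of_vec2 ` vec2_of_complex ` cbox (complex_of_vec2 u) (complex_of_vec2 v)"
    by (simp add: vec2_of_complex_image_cbox)
  also have "\<dots> = cbox (complex_of_vec2 u) (complex_of_vec2 v)" by (simp add: image_image)
  finally show ?thesis .
qed

lemma content_vec2_of_complex_image: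
  "Henstock_Kurzweil_Integration.content (vec2_of_complex ` cbox u v) = Henstock_Kurzweil_Integration.content (cbox u v)"
proof -
  have "cbox (vec2_of_complex u) (vec2_of_complex v) = {} \<longleftrightarrow> \<not> (Re u \<le> Re v \<and> Im u \<le> Im v)"
  proof
    assume "cbox (vec2_of_complex u) (vec2_of_complex v) = {}"
    then have "vec2_of_complex u \<notin> cbox (vec2_of_complex u) (vec2_of_complex v)" by simp
    then show "\<not> (Re u \<le> Re v \<and> Im u \<le> Im v)" by (auto simp: mem_cbox_vec2 vec2_of_complex_def)
  qed (auto simp: mem_cbox_vec2 vec2_of_complex_def)
  moreover have "cbox u v = {} \<longleftrightarrow> \<not> (Re u \<le> Re v \<and> Im u \<le> Im v)"
  proof
    assume "cbox u v = {}"
    then have "u \<notin> cbox u v" by simp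
    then show "\<not> (Re u \<le> Re v \<and> Im u \<le> Im v)" by (auto simp: mem_cbox_complex)
  qed (auto simp: mem_cbox_complex)
  ultimately show ?thesis
    unfolding vec2_of_complex_image_cbox content_cbox_if_cart content_cbox_if
    by (auto simp: UNIV_2 Basis_complex_def vec2_of_complex_def)
qed

lemma has_integral_ball_complex_of_vec2:
  fixes F :: "real^2 \<Rightarrow> 'c::banach"
  assumes "(F has_integral i) (ball 0 R)"
  shows "((\<lambda>z. F (vec2_of_complex z)) has_integral i) (ball 0 R)"
proof -
  have "ball (0::real^2) R \<subseteq> cbox (- vec2 (R,R)) (vec2 (R,R))"
  proof
    fix x :: "real^2" assume "x \<in> ball 0 R"
    moreover have "\<bar>x$1\<bar> \<le> norm x" "\<bar>x$2\<bar> \<le> norm x"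
      by (simp_all add: component_le_norm_cart)
    ultimately show "x \<in> cbox (- vec2 (R,R)) (vec2 (R,R))" by (auto simp: mem_cbox_vec2)
  qed
  moreover have "complex_of_vec2 ` ball 0 R = ball 0 R"
    by (auto simp: image_iff) (metis mem_ball_0 complex_of_vec2_inverse norm_vec2_of_complex)
  ultimately show ?thesis
    using has_integral_linear_transport[of complex_of_vec2 vec2_of_complex, OF
        complex_of_vec2_inverse vec2_of_complex_inverse linear_vec2_of_complex _ _
        content_vec2_of_complex_image _ assms]
    by (simp add: vec2_of_complex_image_cbox complex_of_vec2_image_cbox) blast
qed

definition polar_vec2 :: "real^2 \<Rightarrow> real^2" where
  "polar_vec2 v = vec2 (v$1 * cos (v$2), v$1 * sin (v$2))"

definition polar_vec2' :: "real^2 \<Rightarrow> real^2 \<Rightarrow> real^2" where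
  "polar_vec2' v w = vec2 (w$1 * cos (v$2) - v$1 * sin (v$2) * w$2,
                           w$1 * sin (v$2) + v$1 * cos (v$2) * w$2)"

lemma complex_of_vec2_polar: "complex_of_vec2 (polar_vec2 v) = rcis (v$1) (v$2)"
  by (simp add: complex_of_vec2_def polar_vec2_def complex_eq_iff)

lemma has_derivative_polar_vec2: "(polar_vec2 has_derivative polar_vec2' v) (at v within S)"
proof -
  have "((\<lambda>v. (v$1 * cos (v$2), v$1 * sin (v$2))) has_derivative
     (\<lambda>w. (w$1 * cos (v$2) - v$1 * sin (v$2) * w$2, w$1 * sin (v$2) + v$1 * cos (v$2) * w$2)))
     (at v within S)"
    by (auto intro!: derivative_eq_intros bounded_linear.has_derivative[OF bounded_linear_vec_nth]
      simp: algebra_simps)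
  from bounded_linear.has_derivative[OF linear_vec2[THEN linear_conv_bounded_linear[THEN iffD1]] this]
  show ?thesis unfolding polar_vec2_def polar_vec2'_def by simp
qed

lemma det_polar_vec2': "det (matrix (polar_vec2' v)) = v$1"
proof -
  have "det (matrix (polar_vec2' v)) = v$1 * (cos (v$2))\<^sup>2 + v$1 * (sin (v$2))\<^sup>2"
    by (simp add: det_2 matrix_def polar_vec2'_def axis_def power2_eq_square algebra_simps)
  also have "\<dots> = v$1" by (simp add: distrib_left[symmetric])
  finally show ?thesis .
qed

lemma continuous_on_polar_vec2: "continuous_on S polar_vec2"
  using has_derivative_polar_vec2 has_derivative_continuous_on by blast

definition polar_box :: "real \<Rightarrow> (real^2) set" where
  "polar_box R = box (vec2 (0,0)) (vec2 (R, 2*pi))"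

lemma mem_polar_box: "v \<in> polar_box R \<longleftrightarrow> 0 < v$1 \<and> v$1 < R \<and> 0 < v$2 \<and> v$2 < 2*pi"
  by (auto simp: polar_box_def mem_box_cart forall_2)

lemma inj_on_polar_vec2: "inj_on polar_vec2 (polar_box R)"
proof
  fix v w assume v: "v \<in> polar_box R" and w: "w \<in> polar_box R"
    and "polar_vec2 v = polar_vec2 w"
  then have e: "rcis (v$1) (v$2) = rcis (w$1) (w$2)" by (metis complex_of_vec2_polar)
  then have "norm (rcis (v$1) (v$2)) = norm (rcis (w$1) (w$2))" by simp
  then have r: "v$1 = w$1" using v w by (simp add: mem_polar_box)
  with e v have "cis (v$2) = cis (w$2)" by (simp add: rcis_def mem_polar_box)
  then have "sin (v$2) = sin (w$2) \<and> cos (v$2) = cos (w$2)" by (metis cis.sel)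
  then obtain k :: int where k: "v$2 = w$2 + 2 * pi * k" using sin_cos_eq_iff by blast
  have "\<bar>2 * pi * real_of_int k\<bar> < 2 * pi" using k v w by (auto simp: mem_polar_box)
  then have "\<bar>real_of_int k\<bar> < 1" by (simp add: abs_mult)
  then have "k = 0" by linarith
  with k r show "v = w" by (simp add: vec_eq_iff forall_2)
qed

lemma polar_vec2_image_subset: "polar_vec2 ` polar_box R \<subseteq> ball 0 R"
proof
  fix x assume "x \<in> polar_vec2 ` polar_box R"
  then obtain v where v: "v \<in> polar_box R" "x = polar_vec2 v" by blast
  have "norm x = norm (complex_of_vec2 (polar_vec2 v))" by (simp add: v)
  also have "\<dots> = v$1" using v by (simp add: complex_of_vec2_polar mem_polar_box)
  finally have "norm x = v$1" .
  then show "x \<in> ball 0 R" using v by (simp add: mem_polar_box)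
qed

text \<open>The polar map misses only the slit along the positive real axis, a null set.\<close>

lemma ball_minus_polar_vec2_image: "ball 0 R - polar_vec2 ` polar_box R \<subseteq> {x. x \<bullet> axis 2 1 = 0}"
proof
  fix x :: "real^2" assume x: "x \<in> ball 0 R - polar_vec2 ` polar_box R"
  show "x \<in> {x. x \<bullet> axis 2 1 = 0}"
  proof (rule ccontr)
    assume "x \<notin> {x. x \<bullet> axis 2 1 = 0}"
    then have "x$2 \<noteq> 0" by (simp add: inner_axis)
    define z where "z = complex_of_vec2 x"
    have "Im z \<noteq> 0" using \<open>x$2 \<noteq> 0\<close> by (simp add: z_def complex_of_vec2_def)
    then have "z \<notin> \<real>" by (simp add: complex_is_Real_iff)
    then have "z \<noteq> 0" "Arg z \<noteq> 0" by (auto simp: Arg_eq_0)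
    have "- pi < Arg z" "Arg z \<le> pi" using Arg_bounded by auto
    define \<theta> where "\<theta> = (if Arg z > 0 then Arg z else Arg z + 2*pi)"
    have \<theta>: "0 < \<theta>" "\<theta> < 2*pi"
      using \<open>Arg z \<noteq> 0\<close> \<open>- pi < Arg z\<close> \<open>Arg z \<le> pi\<close> pi_gt_zero by (auto simp: \<theta>_def)
    have "cis \<theta> = cis (Arg z)"
    proof (cases "Arg z > 0")
      case False
      then have "\<theta> = Arg z + 2*pi" by (simp add: \<theta>_def)
      then show ?thesis by (simp add: cis_def complex_eq_iff)
    qed (simp add: \<theta>_def)
    then have "complex_of_vec2 (polar_vec2 (vec2 (norm z, \<theta>))) = z"
      using rcis_cmod_Arg[of z] by (simp add: complex_of_vec2_polar rcis_def)
    then have "polar_vec2 (vec2 (norm z, \<theta>)) = x" by (metis vec2_of_complex_inverse z_def)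
    moreover have "vec2 (norm z, \<theta>) \<in> polar_box R"
    proof -
      have "0 < norm z" using \<open>z \<noteq> 0\<close> by simp
      moreover have "norm z < R" using x by (simp add: z_def)
      ultimately
      show ?thesis using \<theta> by (simp add: mem_polar_box)
    qed
    ultimately show False using x by blast
  qed
qed

lemma has_integral_polar_vec2_image_iff:
  fixes F :: "real^2 \<Rightarrow> 'a::banach"
  shows "(F has_integral b) (polar_vec2 ` polar_box R) \<longleftrightarrow> (F has_integral b) (ball 0 R)"
proof (rule has_integral_spike_set_eq)
  have "{x \<in> polar_vec2 ` polar_box R - ball 0 R. F x \<noteq> 0} = {}"
    using polar_vec2_image_subset by blast
  then show "negligible {x \<in> polar_vec2 ` polar_box R - ball 0 R. F x \<noteq> 0}"
    by (simp only: negligible_empty)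
  have "negligible {x::real^2. x \<bullet> axis 2 1 = 0}"
    by (rule negligible_standard_hyperplane) (simp add: axis_in_Basis_iff)
  then show "negligible {x \<in> ball 0 R - polar_vec2 ` polar_box R. F x \<noteq> 0}"
    by (rule negligible_subset) (use ball_minus_polar_vec2_image in blast)
qed

lemma polar_vec2_cbox:
  assumes "v \<in> cbox (vec2 (0,0)) (vec2 (R, 2*pi))"
  shows "polar_vec2 v \<in> cball 0 R"
proof -
  have "norm (polar_vec2 v) = norm (complex_of_vec2 (polar_vec2 v))" by simp
  also have "\<dots> = v$1" using assms by (simp add: complex_of_vec2_polar mem_cbox_vec2)
  finally show ?thesis using assms by (simp add: mem_cbox_vec2)
qed

lemma has_integral_ball_polar_vec2:
  fixes F :: "real^2 \<Rightarrow> real"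
  assumes F: "continuous_on (cball 0 R) F"
  shows "(F has_integral integral (cbox (vec2 (0,0)) (vec2 (R, 2*pi))) (\<lambda>v. \<bar>v$1\<bar> * F (polar_vec2 v)))
           (ball 0 R)"
proof -
  let ?B = "cbox (vec2 (0,0)) (vec2 (R, 2*pi))"
  let ?G = "\<lambda>v. \<bar>v$1\<bar> * F (polar_vec2 v)"
  let ?vec = "vec :: real \<Rightarrow> real^1"
  define b where "b = integral ?B ?G"
  have "continuous_on ?B ?G"
    by (intro continuous_intros continuous_on_compose2[OF F continuous_on_polar_vec2])
       (auto intro: polar_vec2_cbox)
  then have "?G absolutely_integrable_on ?B"
    by (rule absolutely_integrable_continuous)
  then have G: "?G absolutely_integrable_on polar_box R" "(?G has_integral b) (polar_box R)"
    unfolding b_def polar_box_def absolutely_integrable_on_def integrable_on_def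
      has_integral_open_interval by (auto intro: integrable_integral)
  have bl_vec: "bounded_linear ?vec"
    using linear_vec linear_conv_bounded_linear by blast
  have "(?vec \<circ> ?G) absolutely_integrable_on polar_box R"
    by (rule absolutely_integrable_linear[OF G(1) bl_vec])
  moreover have "integral (polar_box R) (?vec \<circ> ?G) = ?vec b"
    by (rule integral_unique, rule has_integral_linear[OF G(2) bl_vec])
  moreover have "(\<lambda>x. \<bar>det (matrix (polar_vec2' x))\<bar> *\<^sub>R ?vec (F (polar_vec2 x))) = ?vec \<circ> ?G"
    by (simp add: det_polar_vec2' fun_eq_iff vec_eq_iff)
  ultimately have "(\<lambda>x. ?vec (F x)) absolutely_integrable_on polar_vec2 ` polar_box R \<and>
      integral (polar_vec2 ` polar_box R) (\<lambda>x. ?vec (F x)) = ?vec b"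
    using has_absolute_integral_change_of_variables[of "polar_box R" polar_vec2 polar_vec2'
        "\<lambda>x. ?vec (F x)" "?vec b"] has_derivative_polar_vec2 inj_on_polar_vec2
    by (auto simp: polar_box_def)
  then have "((\<lambda>x. ?vec (F x)) has_integral ?vec b) (polar_vec2 ` polar_box R)"
    by (metis absolutely_integrable_on_def has_integral_integrable_integral)
  from has_integral_linear[OF this bounded_linear_vec_nth[of 1]]
  have "(F has_integral b) (polar_vec2 ` polar_box R)" by (simp add: o_def)
  then show ?thesis by (simp add: b_def has_integral_polar_vec2_image_iff)
qed

lemma has_integral_ball_polar:
  fixes f :: "complex \<Rightarrow> real"
  assumes f: "continuous_on (cball 0 R) f"
  shows "(f has_integral integral {0..R} (\<lambda>\<rho>. integral {0..2*pi} (\<lambda>t. \<rho> * f (rcis \<rho> t))))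
           (ball 0 R)"
proof -
  let ?F = "\<lambda>v. f (complex_of_vec2 v)"
  have F: "continuous_on (cball 0 R) ?F"
    by (rule continuous_on_compose2[OF f]) (auto intro: linear_continuous_on
        linear_complex_of_vec2[THEN linear_conv_bounded_linear[THEN iffD1]])
  have "continuous_on (cbox (vec2 (0,0)) (vec2 (R, 2*pi))) (\<lambda>v. \<bar>v$1\<bar> * ?F (polar_vec2 v))"
    by (intro continuous_intros continuous_on_compose2[OF F continuous_on_polar_vec2])
       (auto intro: polar_vec2_cbox)
  from integral_vec2_cbox_Fubini[OF this]
    has_integral_ball_complex_of_vec2[OF has_integral_ball_polar_vec2[OF F]]
  have "(f has_integral integral {0..R} (\<lambda>\<rho>. integral {0..2*pi} (\<lambda>t. \<bar>\<rho>\<bar> * f (rcis \<rho> t))))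
          (ball 0 R)"
    by (simp add: complex_of_vec2_polar)
  moreover have "integral {0..R} (\<lambda>\<rho>. integral {0..2*pi} (\<lambda>t. \<bar>\<rho>\<bar> * f (rcis \<rho> t)))
               = integral {0..R} (\<lambda>\<rho>. integral {0..2*pi} (\<lambda>t. \<rho> * f (rcis \<rho> t)))"
    by (rule integral_cong) simp
  ultimately show ?thesis by simp
qed

lemma circle_integral_rcis: "circle_integral R F = integral {0..2*pi} (\<lambda>t. R *\<^sub>R F (rcis R t))"
  by (simp add: circle_integral_def rcis_def)

lemma integral_complex_of_real:
  fixes f :: "'a::euclidean_space \<Rightarrow> real"
  shows "integral S (\<lambda>x. complex_of_real (f x)) = complex_of_real (integral S f)"
proof (cases "f integrable_on S")
  case True
  then show ?thesis by (intro integral_unique has_integral_of_real integrable_integral)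
next
  case False
  have "\<not> (\<lambda>x. complex_of_real (f x)) integrable_on S"
  proof
    assume "(\<lambda>x. complex_of_real (f x)) integrable_on S"
    from integrable_linear[OF this bounded_linear_Re] False show False by (simp add: o_def)
  qed
  with False show ?thesis by (simp add: not_integrable_integral)
qed

lemma circle_integral_scaleR: "circle_integral R (\<lambda>x. c *\<^sub>R F x) = c *\<^sub>R circle_integral R F"
  by (simp add: circle_integral_def scaleR_left_commute)

lemma circle_integral_of_real:
  "circle_integral R (\<lambda>x. complex_of_real (f x)) = complex_of_real (circle_integral R f)"
  by (simp add: circle_integral_def scaleR_conv_of_real integral_complex_of_real flip: of_real_mult)

lemma frechet_derivative_eq_partials:
  fixes f :: "complex \<Rightarrow> 'b::real_normed_vector"
  assumes "f differentiable (at x)"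
  shows "frechet_derivative f (at x) v = Re v *\<^sub>R d1 f x + Im v *\<^sub>R d2 f x"
proof -
  have lin: "linear (frechet_derivative f (at x))" using assms by (rule linear_frechet_derivative)
  have "v = Re v *\<^sub>R 1 + Im v *\<^sub>R \<i>" by (simp add: complex_eq_iff)
  then have "frechet_derivative f (at x) v = frechet_derivative f (at x) (Re v *\<^sub>R 1 + Im v *\<^sub>R \<i>)"
    by simp
  also have "\<dots> = Re v *\<^sub>R d1 f x + Im v *\<^sub>R d2 f x"
    by (simp add: linear_add[OF lin] linear_cmul[OF lin] d1_def d2_def)
  finally show ?thesis .
qed

lemma has_vector_derivative_line:
  fixes f :: "complex \<Rightarrow> 'b::real_normed_vector"
  assumes "f differentiable (at (p + of_real s * v))"
  shows "((\<lambda>s. f (p + of_real s * v)) has_vector_derivative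
           frechet_derivative f (at (p + of_real s * v)) v) (at s within T)"
proof -
  let ?y = "p + of_real s * v"
  have "((\<lambda>s. p + of_real s * v) has_derivative (\<lambda>h. of_real h * v)) (at s within T)"
    by (auto intro!: derivative_eq_intros)
  from has_derivative_compose[OF this frechet_derivative_works[THEN iffD1, OF assms]]
  have "((\<lambda>s. f (p + of_real s * v)) has_derivative
          (\<lambda>h. frechet_derivative f (at ?y) (of_real h * v))) (at s within T)" .
  moreover have "frechet_derivative f (at ?y) (of_real h * v) = h *\<^sub>R frechet_derivative f (at ?y) v" for h
    using linear_cmul[OF linear_frechet_derivative[OF assms]] by (simp flip: scaleR_conv_of_real)
  ultimately show ?thesis by (simp add: has_vector_derivative_def)
qed

lemma partials_bounded_linear:
  fixes f :: "complex \<Rightarrow> 'b::real_normed_vector" and L :: "'b \<Rightarrow> 'c::real_normed_vector"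
  assumes L: "bounded_linear L" and f: "f differentiable (at x)"
  shows "d1 (\<lambda>y. L (f y)) x = L (d1 f x)" "d2 (\<lambda>y. L (f y)) x = L (d2 f x)"
proof -
  from bounded_linear.has_derivative[OF L frechet_derivative_works[THEN iffD1, OF f]]
  have "frechet_derivative (\<lambda>y. L (f y)) (at x) = (\<lambda>v. L (frechet_derivative f (at x) v))"
    by (rule frechet_derivative_at[symmetric])
  then show "d1 (\<lambda>y. L (f y)) x = L (d1 f x)" "d2 (\<lambda>y. L (f y)) x = L (d2 f x)"
    by (simp_all add: d1_def d2_def)
qed

lemma partials_square:
  fixes f :: "complex \<Rightarrow> real"
  assumes "f differentiable (at x)"
  shows "d1 (\<lambda>y. (f y)\<^sup>2) x = 2 * f x * d1 f x" "d2 (\<lambda>y. (f y)\<^sup>2) x = 2 * f x * d2 f x"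
proof -
  have "((\<lambda>y. (f y)\<^sup>2) has_derivative (\<lambda>v. 2 * f x * frechet_derivative f (at x) v)) (at x)"
    using frechet_derivative_works[THEN iffD1, OF assms]
    by (auto intro!: derivative_eq_intros simp: power2_eq_square algebra_simps)
  then have "frechet_derivative (\<lambda>y. (f y)\<^sup>2) (at x) = (\<lambda>v. 2 * f x * frechet_derivative f (at x) v)"
    by (rule frechet_derivative_at[symmetric])
  then show "d1 (\<lambda>y. (f y)\<^sup>2) x = 2 * f x * d1 f x" "d2 (\<lambda>y. (f y)\<^sup>2) x = 2 * f x * d2 f x"
    by (simp_all add: d1_def d2_def)
qed

lemma C1_on_differentiable_at:
  "C1_on S f \<Longrightarrow> x \<in> S \<Longrightarrow> f differentiable (at x)"
  by (metis C1_on_def at_within_open differentiable_on_def)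

lemma C1_on_continuous_on:
  assumes "C1_on S f"
  shows "continuous_on S f" "continuous_on S (d1 f)" "continuous_on S (d2 f)"
  using assms by (auto simp: C1_on_def intro: differentiable_imp_continuous_on)

lemma C2_on_differentiable_at:
  assumes "C2_on S f" "x \<in> S"
  shows "f differentiable (at x)" "d1 f differentiable (at x)" "d2 f differentiable (at x)"
  using assms C1_on_differentiable_at by (auto simp: C2_on_def)

lemma mean_value_linearization:
  fixes \<phi> :: "real \<Rightarrow> 'b::real_normed_vector"
  assumes h: "0 \<le> h"
    and \<phi>: "\<And>b. b \<in> {0..h} \<Longrightarrow> (\<phi> has_vector_derivative \<phi>' b) (at b within {0..h})"
    and close: "\<And>b. b \<in> {0..h} \<Longrightarrow> norm (\<phi>' b - B) \<le> e"
  shows "norm (\<phi> h - \<phi> 0 - h *\<^sub>R B) \<le> 3 * e * h"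
proof -
  have "norm (\<phi>' b - \<phi>' 0) \<le> 2 * e" if "b \<in> {0..h}" for b
    using norm_diff_triangle_le[OF close[OF that] close[of 0, unfolded norm_minus_commute]] h
    by (simp add: norm_minus_commute)
  then have "norm (\<phi> h - \<phi> 0 - (h - 0) *\<^sub>R \<phi>' 0) \<le> norm (h - 0) * (2 * e)"
    by (intro vector_differentiable_bound_linearization[OF \<phi>])
       (use h in \<open>auto simp: closed_segment_eq_real_ivl\<close>)
  moreover have "norm (h *\<^sub>R \<phi>' 0 - h *\<^sub>R B) \<le> h * e"
    using close[of 0] h by (simp flip: scaleR_diff_right add: mult_left_mono)
  ultimately have "norm (\<phi> h - \<phi> 0 - h *\<^sub>R \<phi>' 0) + norm (h *\<^sub>R \<phi>' 0 - h *\<^sub>R B) \<le> 3 * e * h"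
    using h by (simp add: algebra_simps)
  then show ?thesis
    by (rule order_trans[rotated, OF _ order_trans[OF _ norm_triangle_ineq]]) (simp add: algebra_simps)
qed

lemma mixed_second_difference:
  fixes f :: "complex \<Rightarrow> 'b::real_normed_vector" and x u w :: complex
  defines "Q \<equiv> \<lambda>a b. x + of_real a * u + of_real b * w"
  defines "Du \<equiv> \<lambda>y. frechet_derivative f (at y) u"
  assumes h: "0 < h"
    and f: "\<And>a b. a \<in> {0..h} \<Longrightarrow> b \<in> {0..h} \<Longrightarrow> f differentiable (at (Q a b))"
    and Du: "\<And>a b. a \<in> {0..h} \<Longrightarrow> b \<in> {0..h} \<Longrightarrow> Du differentiable (at (Q a b))"
    and close: "\<And>a b. a \<in> {0..h} \<Longrightarrow> b \<in> {0..h} \<Longrightarrow>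
                  norm (frechet_derivative Du (at (Q a b)) w - A) \<le> e"
  shows "norm (f (Q h h) - f (Q h 0) - f (Q 0 h) + f (Q 0 0) - (h * h) *\<^sub>R A) \<le> 9 * e * (h * h)"
proof -
  have Q_swap: "x + of_real c * w + of_real a * u = Q a c" for a c
    by (simp add: Q_def algebra_simps)
  have inner: "norm (Du (Q a h) - Du (Q a 0) - h *\<^sub>R A) \<le> 3 * e * h" if a: "a \<in> {0..h}" for a
  proof -
    have "((\<lambda>b. Du (Q a b)) has_vector_derivative frechet_derivative Du (at (Q a b)) w)
            (at b within {0..h})" if "b \<in> {0..h}" for b
      using has_vector_derivative_line[of Du "x + of_real a * u" b w] Du[OF a that] by (simp add: Q_def)
    from mean_value_linearization[OF _ this close[OF a]] h
    show ?thesis by (simp add: Q_def)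
  qed
  have "((\<lambda>a. f (Q a c)) has_vector_derivative Du (Q a c)) (at a within {0..h})"
    if "a \<in> {0..h}" "c \<in> {0..h}" for a c
    using has_vector_derivative_line[of f "x + of_real c * w" a u] f[OF that] by (simp add: Q_swap Du_def)
  then have "((\<lambda>a. f (Q a h) - f (Q a 0)) has_vector_derivative Du (Q a h) - Du (Q a 0))
               (at a within {0..h})" if "a \<in> {0..h}" for a
    using h that by (intro has_vector_derivative_diff) auto
  from mean_value_linearization[OF _ this inner] h
  show ?thesis by (simp add: algebra_simps)
qed

lemma second_difference_partials:
  fixes f :: "complex \<Rightarrow> 'b::real_normed_vector"
  assumes f: "C2_on S f" and \<delta>: "ball x \<delta> \<subseteq> S" and h: "0 < h" "3 * h \<le> \<delta>"
    and v: "v \<in> {1, \<i>}" and w: "w \<in> {1, \<i>}"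
    and close: "\<And>y. y \<in> ball x \<delta> \<Longrightarrow>
                  norm (frechet_derivative (\<lambda>y. frechet_derivative f (at y) v) (at y) w - A) \<le> e"
  shows "norm (f (x + of_real h * v + of_real h * w) - f (x + of_real h * v) - f (x + of_real h * w) + f x
               - (h * h) *\<^sub>R A) \<le> 9 * e * (h * h)"
proof -
  have near: "x + of_real a * v + of_real b * w \<in> ball x \<delta>" if "a \<in> {0..h}" "b \<in> {0..h}" for a b
  proof -
    have "norm (of_real a * v + of_real b * w) \<le> a + b"
      using that v w norm_triangle_ineq[of "of_real a * v" "of_real b * w"] by (auto simp: norm_mult)
    then have "dist (x + of_real a * v + of_real b * w) x < \<delta>" using that h by (simp add: dist_norm)
    then show ?thesis by (simp add: dist_commute)
  qed
  have "(\<lambda>y. frechet_derivative f (at y) v) \<in> {d1 f, d2 f}"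
    using v by (auto simp: d1_def[abs_def] d2_def[abs_def])
  then have "f differentiable (at y) \<and> (\<lambda>y. frechet_derivative f (at y) v) differentiable (at y)"
    if "y \<in> ball x \<delta>" for y
    using that C2_on_differentiable_at[OF f] \<delta> by auto
  with mixed_second_difference[OF h(1), of f x v w A e] near close
  show ?thesis by simp
qed

lemma partials_commute:
  fixes f :: "complex \<Rightarrow> 'b::real_normed_vector"
  assumes f: "C2_on S f" and x: "x \<in> S"
  shows "d2 (d1 f) x = d1 (d2 f) x"
proof -
  have S: "open S" and c21: "continuous_on S (d2 (d1 f))" and c12: "continuous_on S (d1 (d2 f))"
    using f by (auto simp: C2_on_def C1_on_def)
  define A B where "A = d2 (d1 f) x" and "B = d1 (d2 f) x"
  \<comment> \<open>Both mixed partials are limits of the same second difference \<open>D / h\<^sup>2\<close>.\<close>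
  have "norm (A - B) \<le> 18 * e" if e: "e > 0" for e
  proof -
    obtain da where da: "da > 0" "\<And>y. y \<in> S \<Longrightarrow> dist y x < da \<Longrightarrow> dist (d2 (d1 f) y) A < e"
      using c21 x e unfolding continuous_on_iff A_def by blast
    obtain db where db: "db > 0" "\<And>y. y \<in> S \<Longrightarrow> dist y x < db \<Longrightarrow> dist (d1 (d2 f) y) B < e"
      using c12 x e unfolding continuous_on_iff B_def by blast
    obtain d0 where d0: "d0 > 0" "ball x d0 \<subseteq> S" using S x open_contains_ball by blast
    define \<delta> where "\<delta> = min d0 (min da db)"
    have \<delta>: "ball x \<delta> \<subseteq> S" using d0 by (auto simp: \<delta>_def)
    have close: "norm (d2 (d1 f) y - A) \<le> e" "norm (d1 (d2 f) y - B) \<le> e" if "y \<in> ball x \<delta>" for y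
    proof -
      have "y \<in> S" "dist y x < da" "dist y x < db" using that \<delta> by (auto simp: \<delta>_def dist_commute)
      then show "norm (d2 (d1 f) y - A) \<le> e" "norm (d1 (d2 f) y - B) \<le> e"
        using da(2) db(2) by (auto simp: dist_norm less_imp_le)
    qed
    define h where "h = \<delta> / 3"
    have h: "0 < h" "3 * h \<le> \<delta>" using d0 da db by (auto simp: h_def \<delta>_def)
    define D where "D = f (x + of_real h + of_real h * \<i>) - f (x + of_real h) - f (x + of_real h * \<i>) + f x"
    have "norm (D - (h * h) *\<^sub>R A) \<le> 9 * e * (h * h)"
      using second_difference_partials[OF f \<delta> h, of 1 \<i> A e] close(1)
      by (simp add: D_def d1_def[symmetric, abs_def] d2_def[symmetric])
    moreover have "norm (D - (h * h) *\<^sub>R B) \<le> 9 * e * (h * h)"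
      using second_difference_partials[OF f \<delta> h, of \<i> 1 B e] close(2)
      by (simp add: D_def d2_def[symmetric, abs_def] d1_def[symmetric] add_ac diff_diff_eq)
    ultimately have "norm ((D - (h * h) *\<^sub>R B) - (D - (h * h) *\<^sub>R A)) \<le> 9 * e * (h * h) + 9 * e * (h * h)"
      using norm_triangle_ineq4[of "D - (h * h) *\<^sub>R B" "D - (h * h) *\<^sub>R A"] by linarith
    moreover have "(D - (h * h) *\<^sub>R B) - (D - (h * h) *\<^sub>R A) = (h * h) *\<^sub>R (A - B)"
      by (simp add: algebra_simps)
    ultimately have "norm ((h * h) *\<^sub>R (A - B)) \<le> (h * h) * (18 * e)" by (simp add: mult_ac)
    then show ?thesis using h by (simp add: mult_le_cancel_left_pos)
  qed
  note est = this
  show ?thesis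
  proof (rule ccontr)
    assume "d2 (d1 f) x \<noteq> d1 (d2 f) x"
    then have "norm (A - B) > 0" by (simp add: A_def B_def)
    with est[of "norm (A - B) / 36"] show False by simp
  qed
qed

definition radial_deriv :: "(complex \<Rightarrow> 'b::real_normed_vector) \<Rightarrow> real \<Rightarrow> real \<Rightarrow> 'b" where
  "radial_deriv f \<rho> t = cos t *\<^sub>R d1 f (rcis \<rho> t) + sin t *\<^sub>R d2 f (rcis \<rho> t)"

definition tangential_deriv :: "(complex \<Rightarrow> 'b::real_normed_vector) \<Rightarrow> real \<Rightarrow> real \<Rightarrow> 'b" where
  "tangential_deriv f \<rho> t = cos t *\<^sub>R d2 f (rcis \<rho> t) - sin t *\<^sub>R d1 f (rcis \<rho> t)"

lemma has_vector_derivative_rcis_radius: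
  fixes f :: "complex \<Rightarrow> 'b::real_normed_vector"
  assumes "f differentiable (at (rcis \<rho> t))"
  shows "((\<lambda>\<rho>. f (rcis \<rho> t)) has_vector_derivative radial_deriv f \<rho> t) (at \<rho> within T)"
  using has_vector_derivative_line[of f 0 \<rho> "cis t" T] assms
    frechet_derivative_eq_partials[OF assms, of "cis t"]
  by (simp add: rcis_def radial_deriv_def)

lemma has_vector_derivative_rcis_angle:
  fixes f :: "complex \<Rightarrow> 'b::real_normed_vector"
  assumes f: "f differentiable (at (rcis \<rho> t))"
  shows "((\<lambda>t. f (rcis \<rho> t)) has_vector_derivative \<rho> *\<^sub>R tangential_deriv f \<rho> t) (at t within T)"
proof -
  have "((\<lambda>t. rcis \<rho> t) has_derivative (\<lambda>h. h *\<^sub>R (of_real \<rho> * (\<i> * cis t)))) (at t within T)"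
    unfolding rcis_def
    by (auto intro!: derivative_eq_intros has_derivative_cis[OF has_derivative_ident]
        simp: algebra_simps scaleR_conv_of_real)
  from has_derivative_compose[OF this frechet_derivative_works[THEN iffD1, OF f]]
  have "((\<lambda>t. f (rcis \<rho> t)) has_derivative
          (\<lambda>h. frechet_derivative f (at (rcis \<rho> t)) (h *\<^sub>R (of_real \<rho> * (\<i> * cis t))))) (at t within T)" .
  moreover have "frechet_derivative f (at (rcis \<rho> t)) (of_real \<rho> * (\<i> * cis t))
      = \<rho> *\<^sub>R tangential_deriv f \<rho> t"
    by (simp add: frechet_derivative_eq_partials[OF f] tangential_deriv_def scaleR_diff_right)
  then have "frechet_derivative f (at (rcis \<rho> t)) (h *\<^sub>R (of_real \<rho> * (\<i> * cis t)))
      = h *\<^sub>R (\<rho> *\<^sub>R tangential_deriv f \<rho> t)" for h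
    by (simp add: linear_cmul[OF linear_frechet_derivative[OF f]])
  ultimately show ?thesis by (simp add: has_vector_derivative_def)
qed

lemma has_vector_derivative_radial_deriv_radius:
  fixes f :: "complex \<Rightarrow> 'b::real_normed_vector"
  assumes "d1 f differentiable (at (rcis \<rho> t))" "d2 f differentiable (at (rcis \<rho> t))"
  shows "((\<lambda>\<rho>. radial_deriv f \<rho> t) has_vector_derivative
           cos t *\<^sub>R radial_deriv (d1 f) \<rho> t + sin t *\<^sub>R radial_deriv (d2 f) \<rho> t) (at \<rho> within T)"
  unfolding radial_deriv_def[of f]
  by (rule derivative_eq_intros has_vector_derivative_rcis_radius assms refl | simp)+

lemma has_vector_derivative_tangential_deriv_radius:
  fixes f :: "complex \<Rightarrow> 'b::real_normed_vector"
  assumes "d1 f differentiable (at (rcis \<rho> t))" "d2 f differentiable (at (rcis \<rho> t))"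
  shows "((\<lambda>\<rho>. tangential_deriv f \<rho> t) has_vector_derivative
           cos t *\<^sub>R radial_deriv (d2 f) \<rho> t - sin t *\<^sub>R radial_deriv (d1 f) \<rho> t) (at \<rho> within T)"
  unfolding tangential_deriv_def[of f]
  by (rule derivative_eq_intros has_vector_derivative_rcis_radius assms refl | simp)+

lemma has_vector_derivative_radial_deriv_angle:
  fixes f :: "complex \<Rightarrow> 'b::real_normed_vector"
  assumes "d1 f differentiable (at (rcis \<rho> t))" "d2 f differentiable (at (rcis \<rho> t))"
  shows "((\<lambda>t. radial_deriv f \<rho> t) has_vector_derivative tangential_deriv f \<rho> t
           + \<rho> *\<^sub>R (cos t *\<^sub>R tangential_deriv (d1 f) \<rho> t + sin t *\<^sub>R tangential_deriv (d2 f) \<rho> t))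
           (at t within T)"
  unfolding radial_deriv_def[of f]
  by (rule derivative_eq_intros has_vector_derivative_rcis_angle assms refl
        has_field_derivative_at_within[OF DERIV_cos] has_field_derivative_at_within[OF DERIV_sin]
        has_real_derivative_iff_has_vector_derivative[THEN iffD1])+
     (simp add: tangential_deriv_def algebra_simps)

lemma has_vector_derivative_tangential_deriv_angle:
  fixes f :: "complex \<Rightarrow> 'b::real_normed_vector"
  assumes "d1 f differentiable (at (rcis \<rho> t))" "d2 f differentiable (at (rcis \<rho> t))"
  shows "((\<lambda>t. tangential_deriv f \<rho> t) has_vector_derivative - radial_deriv f \<rho> t
           + \<rho> *\<^sub>R (cos t *\<^sub>R tangential_deriv (d2 f) \<rho> t - sin t *\<^sub>R tangential_deriv (d1 f) \<rho> t))
           (at t within T)"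
  unfolding tangential_deriv_def[of f]
  by (rule derivative_eq_intros has_vector_derivative_rcis_angle assms refl
        has_field_derivative_at_within[OF DERIV_cos] has_field_derivative_at_within[OF DERIV_sin]
        has_real_derivative_iff_has_vector_derivative[THEN iffD1])+
     (simp add: radial_deriv_def algebra_simps)

lemma continuous_on_rcis_compose:
  assumes "continuous_on S f" "\<And>p. p \<in> A \<Longrightarrow> rcis (fst p) (snd p) \<in> S"
  shows "continuous_on A (\<lambda>p. f (rcis (fst p) (snd p)))"
  by (rule continuous_on_compose2[OF assms(1)]) (use assms(2) in \<open>auto simp: rcis_def
      cis_conv_exp intro!: continuous_intros\<close>)

lemma normal_deriv_rcis:
  assumes "0 < \<rho>" "f differentiable (at (rcis \<rho> t))"
  shows "normal_deriv f (rcis \<rho> t) = radial_deriv f \<rho> t"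
  using assms frechet_derivative_eq_partials[OF assms(2), of "cis t"]
  by (simp add: normal_deriv_def radial_deriv_def rcis_def sgn_mult sgn_of_real)

lemma continuous_on_radial_tangential_deriv:
  assumes "C1_on S f" "\<And>p. p \<in> A \<Longrightarrow> rcis (fst p) (snd p) \<in> S"
  shows "continuous_on A (\<lambda>p. radial_deriv f (fst p) (snd p))"
    "continuous_on A (\<lambda>p. tangential_deriv f (fst p) (snd p))"
  unfolding radial_deriv_def tangential_deriv_def
  using continuous_on_rcis_compose[OF C1_on_continuous_on(2)[OF assms(1)] assms(2)]
    continuous_on_rcis_compose[OF C1_on_continuous_on(3)[OF assms(1)] assms(2)]
  by (auto intro!: continuous_intros)

section \<open>The divergence theorem on a disc, in polar coordinates\<close>

lemma integrable_on_slice: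
  fixes F :: "real \<Rightarrow> real \<Rightarrow> real"
  assumes "continuous_on S (\<lambda>p. F (fst p) (snd p))" "\<And>t. t \<in> {c..d} \<Longrightarrow> (\<rho>, t) \<in> S"
  shows "(\<lambda>t. F \<rho> t) integrable_on {c..d}"
  by (rule integrable_continuous_real, rule continuous_on_compose2[OF assms(1), of _ "\<lambda>t. (\<rho>, t)", simplified])
     (use assms(2) in \<open>auto intro: continuous_intros\<close>)

lemma has_real_derivative_integral_slice:
  fixes G Gr :: "real \<Rightarrow> real \<Rightarrow> real"
  assumes G: "continuous_on ({0..R} \<times> {c..d}) (\<lambda>(\<rho>,t). G \<rho> t)"
    and dG: "\<And>\<rho> t. \<rho> \<in> {0<..<R} \<Longrightarrow> t \<in> {c..d} \<Longrightarrow> ((\<lambda>\<rho>. G \<rho> t) has_real_derivative Gr \<rho> t) (at \<rho>)"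
    and Gr: "continuous_on ({0<..<R} \<times> {c..d}) (\<lambda>(\<rho>,t). Gr \<rho> t)"
    and \<rho>: "\<rho> \<in> {0<..<R}"
  shows "((\<lambda>\<rho>. integral {c..d} (G \<rho>)) has_real_derivative integral {c..d} (Gr \<rho>)) (at \<rho>)"
proof -
  define a b where "a = \<rho>/2" and "b = (\<rho>+R)/2"
  have ab: "a < \<rho>" "\<rho> < b" and sub: "{a..b} \<subseteq> {0<..<R}" using \<rho> by (auto simp: a_def b_def)
  have "((\<lambda>\<rho>. integral (cbox c d) (G \<rho>)) has_field_derivative integral (cbox c d) (Gr \<rho>))
          (at \<rho> within {a..b})"
  proof (rule leibniz_rule_field_derivative)
    fix \<rho>' assume "\<rho>' \<in> {a..b}"
    then have "\<rho>' \<in> {0<..<R}" using sub by blast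
    then show "G \<rho>' integrable_on cbox c d" unfolding cbox_interval by (intro integrable_on_slice[OF G[unfolded case_prod_beta']]) auto
  qed (use ab sub in \<open>auto intro!: has_field_derivative_at_within[OF dG] continuous_on_subset[OF Gr]\<close>)
  then show ?thesis using at_within_Icc_at[OF ab] by simp
qed

text \<open>The hypotheses say \<open>\<partial>\<^sub>\<rho>G + \<partial>\<^sub>tH = K\<close>; the derivative of \<open>H\<close> is given as \<open>K - Gr\<close>
  so that only \<open>Gr\<close> needs to be continuous.\<close>

lemma integral_polar_rectangle_divergence:
  fixes G Gr H K :: "real \<Rightarrow> real \<Rightarrow> real"
  assumes R: "0 < R"
    and G: "continuous_on ({0..R} \<times> {0..2*pi}) (\<lambda>(\<rho>,t). G \<rho> t)"
    and G0: "\<And>t. t \<in> {0..2*pi} \<Longrightarrow> G 0 t = 0"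
    and dG: "\<And>\<rho> t. \<rho> \<in> {0<..<R} \<Longrightarrow> t \<in> {0..2*pi} \<Longrightarrow>
               ((\<lambda>\<rho>. G \<rho> t) has_real_derivative Gr \<rho> t) (at \<rho>)"
    and Gr: "continuous_on ({0<..<R} \<times> {0..2*pi}) (\<lambda>(\<rho>,t). Gr \<rho> t)"
    and dH: "\<And>\<rho> t. \<rho> \<in> {0<..<R} \<Longrightarrow> t \<in> {0..2*pi} \<Longrightarrow>
               ((\<lambda>t. H \<rho> t) has_real_derivative K \<rho> t - Gr \<rho> t) (at t within {0..2*pi})"
    and H_periodic: "\<And>\<rho>. \<rho> \<in> {0<..<R} \<Longrightarrow> H \<rho> 0 = H \<rho> (2*pi)"
    and K: "continuous_on ({0..R} \<times> {0..2*pi}) (\<lambda>(\<rho>,t). K \<rho> t)"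
  shows "integral {0..R} (\<lambda>\<rho>. integral {0..2*pi} (K \<rho>)) = integral {0..2*pi} (G R)"
proof -
  define g where "g \<rho> = integral {0..2*pi} (G \<rho>)" for \<rho>
  have "(g has_real_derivative integral {0..2*pi} (K \<rho>)) (at \<rho>)" if \<rho>: "\<rho> \<in> {0<..<R}" for \<rho>
  proof -
    have "((\<lambda>t. K \<rho> t - Gr \<rho> t) has_integral H \<rho> (2*pi) - H \<rho> 0) {0..2*pi}"
      using dH[OF \<rho>] by (intro fundamental_theorem_of_calculus)
        (auto simp: has_real_derivative_iff_has_vector_derivative[symmetric])
    then have "((\<lambda>t. K \<rho> t - (K \<rho> t - Gr \<rho> t)) has_integral integral {0..2*pi} (K \<rho>) - 0) {0..2*pi}"
      using H_periodic[OF \<rho>] \<rho>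
      by (intro has_integral_diff integrable_integral integrable_on_slice[OF K[unfolded case_prod_beta']])
         auto
    then have "integral {0..2*pi} (Gr \<rho>) = integral {0..2*pi} (K \<rho>)"
      by (simp add: integral_unique)
    with has_real_derivative_integral_slice[OF G dG Gr \<rho>] show ?thesis by (simp add: g_def[abs_def])
  qed
  then have "((\<lambda>\<rho>. integral {0..2*pi} (K \<rho>)) has_integral g R - g 0) {0..R}"
    using R G integral_continuous_on_param[of "{0..R}" 0 "2*pi" G]
    by (intro fundamental_theorem_of_calculus_interior)
       (auto simp: g_def[abs_def] has_real_derivative_iff_has_vector_derivative)
  moreover have "g 0 = integral {0..2*pi} (\<lambda>_. 0::real)"
    unfolding g_def by (rule integral_cong) (simp add: G0)
  ultimately show ?thesis by (simp add: g_def integral_unique)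
qed

lemma integral_ball_polar_divergence:
  fixes \<Phi> :: "complex \<Rightarrow> real" and G Gr H :: "real \<Rightarrow> real \<Rightarrow> real"
  assumes R: "0 < R"
    and \<Phi>: "continuous_on (cball 0 R) \<Phi>"
    and G: "continuous_on ({0..R} \<times> {0..2*pi}) (\<lambda>(\<rho>,t). G \<rho> t)"
    and G0: "\<And>t. t \<in> {0..2*pi} \<Longrightarrow> G 0 t = 0"
    and dG: "\<And>\<rho> t. \<rho> \<in> {0<..<R} \<Longrightarrow> t \<in> {0..2*pi} \<Longrightarrow>
               ((\<lambda>\<rho>. G \<rho> t) has_real_derivative Gr \<rho> t) (at \<rho>)"
    and Gr: "continuous_on ({0<..<R} \<times> {0..2*pi}) (\<lambda>(\<rho>,t). Gr \<rho> t)"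
    and dH: "\<And>\<rho> t. \<rho> \<in> {0<..<R} \<Longrightarrow> t \<in> {0..2*pi} \<Longrightarrow>
               ((\<lambda>t. H \<rho> t) has_real_derivative \<rho> * \<Phi> (rcis \<rho> t) - Gr \<rho> t) (at t within {0..2*pi})"
    and H_periodic: "\<And>\<rho>. \<rho> \<in> {0<..<R} \<Longrightarrow> H \<rho> 0 = H \<rho> (2*pi)"
  shows "integral (ball 0 R) \<Phi> = integral {0..2*pi} (G R)"
proof -
  have "continuous_on ({0..R} \<times> {0..2*pi}) (\<lambda>p. fst p * \<Phi> (rcis (fst p) (snd p)))"
    by (intro continuous_intros continuous_on_rcis_compose[OF \<Phi>]) auto
  then have K: "continuous_on ({0..R} \<times> {0..2*pi}) (\<lambda>(\<rho>,t). \<rho> * \<Phi> (rcis \<rho> t))"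
    by (simp add: case_prod_beta')
  have "integral (ball 0 R) \<Phi> = integral {0..R} (\<lambda>\<rho>. integral {0..2*pi} (\<lambda>t. \<rho> * \<Phi> (rcis \<rho> t)))"
    using has_integral_ball_polar[OF \<Phi>] by (rule integral_unique)
  also have "\<dots> = integral {0..2*pi} (G R)"
    by (rule integral_polar_rectangle_divergence[OF R G G0 dG Gr dH H_periodic K])
  finally show ?thesis .
qed

section \<open>The Pohozaev flux of a scalar function\<close>

definition scalar_radial_flux :: "(complex \<Rightarrow> real) \<Rightarrow> real \<Rightarrow> real \<Rightarrow> real" where
  "scalar_radial_flux u \<rho> t = \<rho>\<^sup>2 / 2 * ((radial_deriv u \<rho> t)\<^sup>2 - (tangential_deriv u \<rho> t)\<^sup>2)"

definition scalar_radial_flux' :: "(complex \<Rightarrow> real) \<Rightarrow> real \<Rightarrow> real \<Rightarrow> real" where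
  "scalar_radial_flux' u \<rho> t = \<rho> * ((radial_deriv u \<rho> t)\<^sup>2 - (tangential_deriv u \<rho> t)\<^sup>2)
     + \<rho>\<^sup>2 * (radial_deriv u \<rho> t * (cos t * radial_deriv (d1 u) \<rho> t + sin t * radial_deriv (d2 u) \<rho> t)
             - tangential_deriv u \<rho> t * (cos t * radial_deriv (d2 u) \<rho> t - sin t * radial_deriv (d1 u) \<rho> t))"

definition scalar_angular_flux :: "(complex \<Rightarrow> real) \<Rightarrow> real \<Rightarrow> real \<Rightarrow> real" where
  "scalar_angular_flux u \<rho> t = \<rho> * radial_deriv u \<rho> t * tangential_deriv u \<rho> t"

lemma has_real_derivative_scalar_radial_flux:
  assumes "d1 u differentiable (at (rcis \<rho> t))" "d2 u differentiable (at (rcis \<rho> t))"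
  shows "((\<lambda>\<rho>. scalar_radial_flux u \<rho> t) has_real_derivative scalar_radial_flux' u \<rho> t) (at \<rho> within T)"
proof -
  have "((\<lambda>\<rho>. radial_deriv u \<rho> t) has_real_derivative
          cos t * radial_deriv (d1 u) \<rho> t + sin t * radial_deriv (d2 u) \<rho> t) (at \<rho> within T)"
    "((\<lambda>\<rho>. tangential_deriv u \<rho> t) has_real_derivative
          cos t * radial_deriv (d2 u) \<rho> t - sin t * radial_deriv (d1 u) \<rho> t) (at \<rho> within T)"
    using has_vector_derivative_radial_deriv_radius[OF assms, of T]
      has_vector_derivative_tangential_deriv_radius[OF assms, of T]
    by (simp_all add: has_real_derivative_iff_has_vector_derivative)
  then show ?thesis
    unfolding scalar_radial_flux_def scalar_radial_flux'_def
    by (auto intro!: derivative_eq_intros simp: field_simps power2_eq_square)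
qed

lemma has_real_derivative_scalar_angular_flux:
  assumes u: "C2_on S u" and xS: "rcis \<rho> t \<in> S"
  shows "((\<lambda>t. scalar_angular_flux u \<rho> t) has_real_derivative
           \<rho>\<^sup>2 * radial_deriv u \<rho> t * laplacian u (rcis \<rho> t) - scalar_radial_flux' u \<rho> t) (at t within T)"
proof -
  define x where "x = rcis \<rho> t"
  note diff = C2_on_differentiable_at[OF u xS]
  have "((\<lambda>t. scalar_angular_flux u \<rho> t) has_real_derivative
          \<rho> * ((tangential_deriv u \<rho> t + \<rho> * (cos t * tangential_deriv (d1 u) \<rho> t
                   + sin t * tangential_deriv (d2 u) \<rho> t)) * tangential_deriv u \<rho> t
              + radial_deriv u \<rho> t * (- radial_deriv u \<rho> t + \<rho> * (cos t * tangential_deriv (d2 u) \<rho> t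
                   - sin t * tangential_deriv (d1 u) \<rho> t)))) (at t within T)"
    using has_vector_derivative_radial_deriv_angle[OF diff(2,3), of T]
      has_vector_derivative_tangential_deriv_angle[OF diff(2,3), of T]
    unfolding scalar_angular_flux_def has_real_derivative_iff_has_vector_derivative[symmetric]
      real_scaleR_def
    by (auto intro!: derivative_eq_intros simp: algebra_simps)
  moreover have "(cos t)\<^sup>2 + (sin t)\<^sup>2 = 1" by simp
  moreover have "d2 (d1 u) x = d1 (d2 u) x" using partials_commute[OF u xS] by (simp add: x_def)
  ultimately show ?thesis
    unfolding scalar_radial_flux'_def radial_deriv_def tangential_deriv_def laplacian_def
      real_scaleR_def x_def[symmetric]
    by (elim DERIV_cong) algebra
qed

section \<open>Spinors\<close>

lemma clifford_eq: "clifford x \<psi> = (x * snd \<psi>, - (cnj x * fst \<psi>))"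
  by (cases \<psi>) (simp add: clifford_def complex_eq_iff)

lemma norm_clifford: "norm (clifford x \<psi>) = norm x * norm \<psi>"
proof -
  have "(norm (clifford x \<psi>))\<^sup>2 = (norm x * norm \<psi>)\<^sup>2"
    by (cases \<psi>) (simp add: clifford_eq norm_Pair norm_mult power_mult_distrib algebra_simps)
  then show ?thesis by (simp add: power2_eq_iff_nonneg)
qed

lemma bounded_bilinear_clifford: "bounded_bilinear clifford"
proof
  show "\<exists>K. \<forall>x \<psi>. norm (clifford x \<psi>) \<le> norm x * norm \<psi> * K"
    by (rule exI[of _ 1]) (simp add: norm_clifford)
qed (simp_all add: clifford_eq algebra_simps scaleR_conv_of_real)

lemma dirac_eq_partials:
  assumes "\<Psi> differentiable (at x)"
  shows "dirac \<Psi> x = (snd (d1 \<Psi> x) + \<i> * snd (d2 \<Psi> x), \<i> * fst (d2 \<Psi> x) - fst (d1 \<Psi> x))"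
  using partials_bounded_linear[OF bounded_linear_fst assms]
    partials_bounded_linear[OF bounded_linear_snd assms]
  by (simp add: dirac_def dzbar_def dz_def field_simps)

lemma dirac_eq_components:
  assumes "\<Psi> differentiable (at x)" "dirac \<Psi> x = - h *\<^sub>R \<Psi> x"
  shows "Re (snd (d1 \<Psi> x)) - Im (snd (d2 \<Psi> x)) = - h * Re (fst (\<Psi> x))"
    "Im (snd (d1 \<Psi> x)) + Re (snd (d2 \<Psi> x)) = - h * Im (fst (\<Psi> x))"
    "- Im (fst (d2 \<Psi> x)) - Re (fst (d1 \<Psi> x)) = - h * Re (snd (\<Psi> x))"
    "Re (fst (d2 \<Psi> x)) - Im (fst (d1 \<Psi> x)) = - h * Im (snd (\<Psi> x))"
  using assms(2) unfolding dirac_eq_partials[OF assms(1)]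
  by (simp_all add: prod_eq_iff complex_eq_iff)

lemma clifford_rcis: "clifford (rcis \<rho> t) \<psi> = \<rho> *\<^sub>R clifford (cis t) \<psi>"
  by (simp add: clifford_eq rcis_def scaleR_conv_of_real)

lemma continuous_on_clifford [continuous_intros]:
  "continuous_on S f \<Longrightarrow> continuous_on S g \<Longrightarrow> continuous_on S (\<lambda>x. clifford (f x) (g x))"
  by (rule bounded_bilinear.continuous_on[OF bounded_bilinear_clifford])

lemma herm_add_herm_commute: "herm \<phi> \<psi> + herm \<psi> \<phi> = complex_of_real (2 * inner \<phi> \<psi>)"
  by (simp add: herm_def inner_prod_def inner_complex_def complex_eq_iff)

text \<open>The Dirac operator is \<open>\<nu>\<cdot>\<partial>\<^sub>\<nu> + \<tau>\<cdot>\<partial>\<^sub>\<tau>\<close> with \<open>\<nu> = cis t\<close> and \<open>\<tau> = \<i> * cis t\<close>;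
  pairing the Dirac equation with \<open>\<nu>\<cdot>\<Psi>\<close> trades the normal derivative for the tangential one.\<close>

lemma dirac_radial_tangential:
  assumes "\<Psi> differentiable (at (rcis \<rho> t))" "dirac \<Psi> (rcis \<rho> t) = - h *\<^sub>R \<Psi> (rcis \<rho> t)"
  shows "inner (radial_deriv \<Psi> \<rho> t) (clifford (cis t) (\<Psi> (rcis \<rho> t)))
       = h * (norm (\<Psi> (rcis \<rho> t)))\<^sup>2 + inner (clifford (\<i> * cis t) (tangential_deriv \<Psi> \<rho> t)) (\<Psi> (rcis \<rho> t))"
proof -
  define x where "x = rcis \<rho> t"
  have dx: "\<Psi> differentiable (at x)" and eq: "dirac \<Psi> x = - h *\<^sub>R \<Psi> x"
    using assms by (simp_all add: x_def)
  have cs: "(cos t)\<^sup>2 + (sin t)\<^sup>2 = 1" by simp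
  from dirac_eq_components[OF dx eq] show ?thesis
    unfolding radial_deriv_def tangential_deriv_def x_def[symmetric]
    by (simp add: clifford_eq inner_prod_def inner_complex_def power2_norm_eq_inner) (use cs in algebra)
qed

lemma has_vector_derivative_cis: "(cis has_vector_derivative \<i> * cis t) (at t within T)"
  using has_derivative_cis[OF has_derivative_ident] by (simp add: has_vector_derivative_def)

lemma has_real_derivative_inner_clifford:
  assumes "(c has_vector_derivative c') (at s within T)" "(w has_vector_derivative w') (at s within T)"
    "(z has_vector_derivative z') (at s within T)"
  shows "((\<lambda>s. inner (clifford (c s) (w s)) (z s)) has_real_derivative
           inner (clifford (c s) (w s)) z' + inner (clifford (c s) w' + clifford c' (w s)) (z s))
           (at s within T)"
  unfolding has_real_derivative_iff_has_vector_derivative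
  by (intro bounded_bilinear.has_vector_derivative[OF bounded_bilinear_inner]
      bounded_bilinear.has_vector_derivative[OF bounded_bilinear_clifford] assms)

definition spinor_radial_flux :: "(complex \<Rightarrow> complex \<times> complex) \<Rightarrow> real \<Rightarrow> real \<Rightarrow> real" where
  "spinor_radial_flux \<Psi> \<rho> t =
     - \<rho>\<^sup>2 * inner (clifford (\<i> * cis t) (tangential_deriv \<Psi> \<rho> t)) (\<Psi> (rcis \<rho> t))"

definition spinor_radial_flux' :: "(complex \<Rightarrow> complex \<times> complex) \<Rightarrow> real \<Rightarrow> real \<Rightarrow> real" where
  "spinor_radial_flux' \<Psi> \<rho> t =
     - (2 * \<rho> * inner (clifford (\<i> * cis t) (tangential_deriv \<Psi> \<rho> t)) (\<Psi> (rcis \<rho> t))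
        + \<rho>\<^sup>2 * (inner (clifford (\<i> * cis t) (cos t *\<^sub>R radial_deriv (d2 \<Psi>) \<rho> t
                                          - sin t *\<^sub>R radial_deriv (d1 \<Psi>) \<rho> t)) (\<Psi> (rcis \<rho> t))
                + inner (clifford (\<i> * cis t) (tangential_deriv \<Psi> \<rho> t)) (radial_deriv \<Psi> \<rho> t)))"

definition spinor_angular_flux :: "(complex \<Rightarrow> complex \<times> complex) \<Rightarrow> real \<Rightarrow> real \<Rightarrow> real" where
  "spinor_angular_flux \<Psi> \<rho> t = \<rho> * inner (clifford (\<i> * cis t) (radial_deriv \<Psi> \<rho> t)) (\<Psi> (rcis \<rho> t))"

lemma has_real_derivative_spinor_radial_flux:
  assumes "\<Psi> differentiable (at (rcis \<rho> t))"
    "d1 \<Psi> differentiable (at (rcis \<rho> t))" "d2 \<Psi> differentiable (at (rcis \<rho> t))"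
  shows "((\<lambda>\<rho>. spinor_radial_flux \<Psi> \<rho> t) has_real_derivative spinor_radial_flux' \<Psi> \<rho> t) (at \<rho> within T)"
proof -
  have "((\<lambda>\<rho>. inner (clifford (\<i> * cis t) (tangential_deriv \<Psi> \<rho> t)) (\<Psi> (rcis \<rho> t))) has_real_derivative
          inner (clifford (\<i> * cis t) (tangential_deriv \<Psi> \<rho> t)) (radial_deriv \<Psi> \<rho> t)
          + inner (clifford (\<i> * cis t) (cos t *\<^sub>R radial_deriv (d2 \<Psi>) \<rho> t - sin t *\<^sub>R radial_deriv (d1 \<Psi>) \<rho> t)
                   + clifford 0 (tangential_deriv \<Psi> \<rho> t)) (\<Psi> (rcis \<rho> t))) (at \<rho> within T)"
    by (intro has_real_derivative_inner_clifford has_vector_derivative_const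
        has_vector_derivative_tangential_deriv_radius has_vector_derivative_rcis_radius assms)
  then show ?thesis
    unfolding spinor_radial_flux_def spinor_radial_flux'_def
    by (auto intro!: derivative_eq_intros simp: bounded_bilinear.zero_left[OF bounded_bilinear_clifford]
        algebra_simps power2_eq_square)
qed

lemma has_real_derivative_spinor_angular_flux:
  assumes \<Psi>: "C2_on S \<Psi>" and xS: "rcis \<rho> t \<in> S"
    and dirac: "dirac \<Psi> (rcis \<rho> t) = - h *\<^sub>R \<Psi> (rcis \<rho> t)"
  shows "((\<lambda>t. spinor_angular_flux \<Psi> \<rho> t) has_real_derivative
           \<rho> * h * (norm (\<Psi> (rcis \<rho> t)))\<^sup>2 + 2 * \<rho>\<^sup>2 * h * inner (radial_deriv \<Psi> \<rho> t) (\<Psi> (rcis \<rho> t))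
           - spinor_radial_flux' \<Psi> \<rho> t) (at t within T)"
proof -
  define x where "x = rcis \<rho> t"
  note diff = C2_on_differentiable_at[OF \<Psi> xS]
  have "((\<lambda>t. inner (clifford (\<i> * cis t) (radial_deriv \<Psi> \<rho> t)) (\<Psi> (rcis \<rho> t))) has_real_derivative
          inner (clifford (\<i> * cis t) (radial_deriv \<Psi> \<rho> t)) (\<rho> *\<^sub>R tangential_deriv \<Psi> \<rho> t)
          + inner (clifford (\<i> * cis t) (tangential_deriv \<Psi> \<rho> t
                + \<rho> *\<^sub>R (cos t *\<^sub>R tangential_deriv (d1 \<Psi>) \<rho> t + sin t *\<^sub>R tangential_deriv (d2 \<Psi>) \<rho> t))
              + clifford (\<i> * (\<i> * cis t)) (radial_deriv \<Psi> \<rho> t)) (\<Psi> (rcis \<rho> t))) (at t within T)"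
    by (intro has_real_derivative_inner_clifford has_vector_derivative_mult_right has_vector_derivative_cis
        has_vector_derivative_radial_deriv_angle has_vector_derivative_rcis_angle diff)
  then have "((\<lambda>t. spinor_angular_flux \<Psi> \<rho> t) has_real_derivative \<rho> * (
          inner (clifford (\<i> * cis t) (radial_deriv \<Psi> \<rho> t)) (\<rho> *\<^sub>R tangential_deriv \<Psi> \<rho> t)
          + inner (clifford (\<i> * cis t) (tangential_deriv \<Psi> \<rho> t
                + \<rho> *\<^sub>R (cos t *\<^sub>R tangential_deriv (d1 \<Psi>) \<rho> t + sin t *\<^sub>R tangential_deriv (d2 \<Psi>) \<rho> t))
              + clifford (\<i> * (\<i> * cis t)) (radial_deriv \<Psi> \<rho> t)) (\<Psi> (rcis \<rho> t)))) (at t within T)"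
    unfolding spinor_angular_flux_def by (rule DERIV_cmult)
  moreover have "\<Psi> differentiable (at x)" "dirac \<Psi> x = - h *\<^sub>R \<Psi> x"
    using diff(1) dirac by (simp_all add: x_def)
  note components = dirac_eq_components[OF this]
  have comm: "d2 (d1 \<Psi>) x = d1 (d2 \<Psi>) x"
    using partials_commute[OF \<Psi> xS] by (simp add: x_def)
  have cs: "(cos t)\<^sup>2 + (sin t)\<^sup>2 = 1" by simp
  from calculation components show ?thesis
    unfolding spinor_radial_flux'_def radial_deriv_def tangential_deriv_def x_def[symmetric] comm
    by (elim DERIV_cong)
       (simp add: clifford_eq inner_prod_def inner_complex_def power2_norm_eq_inner, use cs in algebra)
qed

section \<open>The Pohozaev identity for the super-Liouville system\<close>

lemma has_real_derivative_rpow: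
  assumes "0 < x"
  shows "((\<lambda>x. rpow x a) has_real_derivative a * rpow x a / x) (at x within T)"
proof (cases "a = 0")
  case False
  have "((\<lambda>x. x powr a) has_real_derivative a * x powr (a - 1)) (at x)"
    by (rule has_real_derivative_powr[OF assms])
  moreover have "a * x powr (a - 1) = a * x powr a / x" using assms by (simp add: powr_diff)
  ultimately show ?thesis using False by (simp add: rpow_def has_field_derivative_at_within)
qed (simp add: rpow_def)

lemma continuous_on_rpow:
  assumes "0 \<le> a" "\<And>x. x \<in> S \<Longrightarrow> 0 \<le> f x" "continuous_on S f"
  shows "continuous_on S (\<lambda>x. rpow (f x) a)"
  using assms by (cases "a = 0") (auto simp: rpow_def intro!: continuous_on_powr')

locale super_liouville_solution =
  fixes \<alpha> r :: real and V u :: "complex \<Rightarrow> real" and \<Psi> :: "complex \<Rightarrow> complex \<times> complex"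
  assumes alpha: "0 \<le> \<alpha>"
    and V: "C1_on (ball 0 r) V"
    and u: "C2_on (ball 0 r) u"
    and \<Psi>: "C2_on (ball 0 r) \<Psi>"
    and eq_u: "\<And>x. x \<in> ball 0 r \<Longrightarrow> - laplacian u x =
        2 * (V x)\<^sup>2 * rpow (norm x) (2*\<alpha>) * exp (2 * u x)
        - V x * rpow (norm x) \<alpha> * exp (u x) * (norm (\<Psi> x))\<^sup>2"
    and eq_\<Psi>: "\<And>x. x \<in> ball 0 r \<Longrightarrow>
        dirac \<Psi> x = - (V x * rpow (norm x) \<alpha> * exp (u x)) *\<^sub>R \<Psi> x"
begin

definition liouville_nonlinearity :: "complex \<Rightarrow> real" where
  "liouville_nonlinearity x = 2 * (V x)\<^sup>2 * rpow (norm x) (2*\<alpha>) * exp (2 * u x)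
                               - V x * rpow (norm x) \<alpha> * exp (u x) * (norm (\<Psi> x))\<^sup>2"

definition weight_variation :: "complex \<Rightarrow> real" where
  "weight_variation x = rpow (norm x) (2*\<alpha>) * exp (2 * u x) * (x \<bullet> grad (\<lambda>y. (V y)\<^sup>2) x)
                          - rpow (norm x) \<alpha> * exp (u x) * (norm (\<Psi> x))\<^sup>2 * (x \<bullet> grad V x)"

definition pohozaev_density :: "complex \<Rightarrow> real" where
  "pohozaev_density x = (1 + \<alpha>) * liouville_nonlinearity x + weight_variation x"

lemma C1_on_data:
  "C1_on (ball 0 r) u" "C1_on (ball 0 r) (d1 u)" "C1_on (ball 0 r) (d2 u)" "C1_on (ball 0 r) V"
  "C1_on (ball 0 r) \<Psi>" "C1_on (ball 0 r) (d1 \<Psi>)" "C1_on (ball 0 r) (d2 \<Psi>)"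
  using u V \<Psi> by (auto simp: C2_on_def)

lemma continuous_on_liouville_nonlinearity: "continuous_on (ball 0 r) liouville_nonlinearity"
  unfolding liouville_nonlinearity_def
  using C1_on_continuous_on(1)[OF C1_on_data(1)] C1_on_continuous_on(1)[OF C1_on_data(4)]
    C1_on_continuous_on(1)[OF C1_on_data(5)] alpha
  by (intro continuous_intros continuous_on_rpow) auto

lemma continuous_on_weight_variation: "continuous_on (ball 0 r) weight_variation"
proof (rule continuous_on_cong[THEN iffD1, OF refl])
  show "continuous_on (ball 0 r) (\<lambda>x. rpow (norm x) (2*\<alpha>) * exp (2 * u x)
          * (2 * V x * (Re x * d1 V x + Im x * d2 V x))
          - rpow (norm x) \<alpha> * exp (u x) * (norm (\<Psi> x))\<^sup>2 * (Re x * d1 V x + Im x * d2 V x))"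
    using C1_on_continuous_on[OF C1_on_data(4)] C1_on_continuous_on(1)[OF C1_on_data(1)]
      C1_on_continuous_on(1)[OF C1_on_data(5)] alpha
    by (intro continuous_intros continuous_on_rpow) auto
  show "rpow (norm x) (2*\<alpha>) * exp (2 * u x) * (2 * V x * (Re x * d1 V x + Im x * d2 V x))
          - rpow (norm x) \<alpha> * exp (u x) * (norm (\<Psi> x))\<^sup>2 * (Re x * d1 V x + Im x * d2 V x)
        = weight_variation x"
    if "x \<in> ball 0 r" for x
    using partials_square[OF C1_on_differentiable_at[OF V that]]
    by (simp add: weight_variation_def grad_def inner_complex_def algebra_simps)
qed

definition weight_flux :: "real \<Rightarrow> real \<Rightarrow> real" where
  "weight_flux \<rho> t = \<rho>\<^sup>2 * (rpow \<rho> (2*\<alpha>) * (V (rcis \<rho> t))\<^sup>2 * exp (2 * u (rcis \<rho> t))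
                         - rpow \<rho> \<alpha> * V (rcis \<rho> t) * exp (u (rcis \<rho> t)) * (norm (\<Psi> (rcis \<rho> t)))\<^sup>2)"

definition weight_flux' :: "real \<Rightarrow> real \<Rightarrow> real" where
  "weight_flux' \<rho> t =
     (2 + 2*\<alpha>) * \<rho> * rpow \<rho> (2*\<alpha>) * (V (rcis \<rho> t))\<^sup>2 * exp (2 * u (rcis \<rho> t))
     + 2 * \<rho>\<^sup>2 * rpow \<rho> (2*\<alpha>) * V (rcis \<rho> t) * exp (2 * u (rcis \<rho> t))
         * (radial_deriv V \<rho> t + V (rcis \<rho> t) * radial_deriv u \<rho> t)
     - (2 + \<alpha>) * \<rho> * rpow \<rho> \<alpha> * V (rcis \<rho> t) * exp (u (rcis \<rho> t)) * (norm (\<Psi> (rcis \<rho> t)))\<^sup>2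
     - \<rho>\<^sup>2 * rpow \<rho> \<alpha> * exp (u (rcis \<rho> t))
         * ((radial_deriv V \<rho> t + V (rcis \<rho> t) * radial_deriv u \<rho> t) * (norm (\<Psi> (rcis \<rho> t)))\<^sup>2
            + 2 * V (rcis \<rho> t) * inner (radial_deriv \<Psi> \<rho> t) (\<Psi> (rcis \<rho> t)))"

lemma has_real_derivative_weight_flux:
  assumes \<rho>: "0 < \<rho>" and x: "rcis \<rho> t \<in> ball 0 r"
  shows "((\<lambda>\<rho>. weight_flux \<rho> t) has_real_derivative weight_flux' \<rho> t) (at \<rho> within T)"
proof -
  have dV: "((\<lambda>\<rho>. V (rcis \<rho> t)) has_real_derivative radial_deriv V \<rho> t) (at \<rho> within T)"
    and du: "((\<lambda>\<rho>. u (rcis \<rho> t)) has_real_derivative radial_deriv u \<rho> t) (at \<rho> within T)"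
    using has_vector_derivative_rcis_radius C1_on_differentiable_at[OF V x]
      C2_on_differentiable_at(1)[OF u x]
    by (simp_all add: has_real_derivative_iff_has_vector_derivative)
  have dS: "((\<lambda>\<rho>. (norm (\<Psi> (rcis \<rho> t)))\<^sup>2) has_real_derivative
      2 * inner (radial_deriv \<Psi> \<rho> t) (\<Psi> (rcis \<rho> t))) (at \<rho> within T)"
    using bounded_bilinear.has_vector_derivative[OF bounded_bilinear_inner
        has_vector_derivative_rcis_radius has_vector_derivative_rcis_radius,
        OF C2_on_differentiable_at(1)[OF \<Psi> x] C2_on_differentiable_at(1)[OF \<Psi> x]]
    by (simp add: power2_norm_eq_inner has_real_derivative_iff_has_vector_derivative inner_commute)
  show ?thesis
    unfolding weight_flux_def weight_flux'_def
    by (rule dS dV du has_real_derivative_rpow[OF \<rho>] derivative_eq_intros refl)+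
       (use \<rho> in \<open>simp add: field_simps power2_eq_square\<close>)
qed

lemma pohozaev_density_polar:
  fixes \<rho> t :: real
  assumes \<rho>: "0 < \<rho>" "\<rho> < r"
  defines "x \<equiv> rcis \<rho> t"
  shows "\<rho> * pohozaev_density x
       = \<rho>\<^sup>2 * radial_deriv u \<rho> t * laplacian u x + weight_flux' \<rho> t
         + \<rho> * (V x * rpow \<rho> \<alpha> * exp (u x)) * (norm (\<Psi> x))\<^sup>2
         + 2 * \<rho>\<^sup>2 * (V x * rpow \<rho> \<alpha> * exp (u x)) * inner (radial_deriv \<Psi> \<rho> t) (\<Psi> x)"
proof -
  have x: "x \<in> ball 0 r" "norm x = \<rho>" using \<rho> by (simp_all add: x_def)
  have gV: "x \<bullet> grad V x = \<rho> * radial_deriv V \<rho> t"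
    by (simp add: grad_def inner_complex_def radial_deriv_def x_def algebra_simps)
  have gV2: "x \<bullet> grad (\<lambda>y. (V y)\<^sup>2) x = 2 * V x * (\<rho> * radial_deriv V \<rho> t)"
    using partials_square[OF C1_on_differentiable_at[OF V x(1)]]
    by (simp add: grad_def inner_complex_def radial_deriv_def x_def algebra_simps)
  have lap: "laplacian u x = - (2 * (V x)\<^sup>2 * rpow \<rho> (2*\<alpha>) * exp (2 * u x)
        - V x * rpow \<rho> \<alpha> * exp (u x) * (norm (\<Psi> x))\<^sup>2)"
    using eq_u[OF x(1)] x(2) by simp
  show ?thesis
    unfolding pohozaev_density_def liouville_nonlinearity_def weight_variation_def weight_flux'_def
      x(2) x_def[symmetric] gV gV2 lap
    by (simp add: algebra_simps power2_eq_square)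
qed

definition pohozaev_radial_flux :: "real \<Rightarrow> real \<Rightarrow> real" where
  "pohozaev_radial_flux \<rho> t = scalar_radial_flux u \<rho> t + weight_flux \<rho> t + spinor_radial_flux \<Psi> \<rho> t"

definition pohozaev_radial_flux' :: "real \<Rightarrow> real \<Rightarrow> real" where
  "pohozaev_radial_flux' \<rho> t = scalar_radial_flux' u \<rho> t + weight_flux' \<rho> t + spinor_radial_flux' \<Psi> \<rho> t"

definition pohozaev_angular_flux :: "real \<Rightarrow> real \<Rightarrow> real" where
  "pohozaev_angular_flux \<rho> t = scalar_angular_flux u \<rho> t + spinor_angular_flux \<Psi> \<rho> t"

lemma has_real_derivative_pohozaev_radial_flux:
  assumes "0 < \<rho>" "\<rho> < r"
  shows "((\<lambda>\<rho>. pohozaev_radial_flux \<rho> t) has_real_derivative pohozaev_radial_flux' \<rho> t) (at \<rho> within T)"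
proof -
  have x: "rcis \<rho> t \<in> ball 0 r" using assms by simp
  show ?thesis
    unfolding pohozaev_radial_flux_def pohozaev_radial_flux'_def
    by (intro DERIV_add has_real_derivative_scalar_radial_flux has_real_derivative_weight_flux
        has_real_derivative_spinor_radial_flux C2_on_differentiable_at[OF u x]
        C2_on_differentiable_at[OF \<Psi> x] assms x)
qed

lemma has_real_derivative_pohozaev_angular_flux:
  assumes \<rho>: "0 < \<rho>" "\<rho> < r"
  shows "((\<lambda>t. pohozaev_angular_flux \<rho> t) has_real_derivative
           \<rho> * pohozaev_density (rcis \<rho> t) - pohozaev_radial_flux' \<rho> t) (at t within T)"
proof -
  have x: "rcis \<rho> t \<in> ball 0 r" using \<rho> by simp
  have "dirac \<Psi> (rcis \<rho> t) = - (V (rcis \<rho> t) * rpow \<rho> \<alpha> * exp (u (rcis \<rho> t))) *\<^sub>R \<Psi> (rcis \<rho> t)"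
    using eq_\<Psi>[OF x] \<rho> by simp
  from DERIV_add[OF has_real_derivative_scalar_angular_flux[OF u x, where T = T]
      has_real_derivative_spinor_angular_flux[OF \<Psi> x this, where T = T]]
  show ?thesis
    unfolding pohozaev_angular_flux_def pohozaev_radial_flux'_def pohozaev_density_polar[OF \<rho>]
    by (elim DERIV_cong) (simp add: algebra_simps)
qed

lemma continuous_on_polar_data:
  defines "D \<equiv> {0..<r} \<times> (UNIV :: real set)"
  shows "continuous_on D (\<lambda>p. u (rcis (fst p) (snd p)))"
    "continuous_on D (\<lambda>p. V (rcis (fst p) (snd p)))"
    "continuous_on D (\<lambda>p. \<Psi> (rcis (fst p) (snd p)))"
    "continuous_on D (\<lambda>p. radial_deriv u (fst p) (snd p))"
    "continuous_on D (\<lambda>p. tangential_deriv u (fst p) (snd p))"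
    "continuous_on D (\<lambda>p. radial_deriv (d1 u) (fst p) (snd p))"
    "continuous_on D (\<lambda>p. radial_deriv (d2 u) (fst p) (snd p))"
    "continuous_on D (\<lambda>p. radial_deriv V (fst p) (snd p))"
    "continuous_on D (\<lambda>p. radial_deriv \<Psi> (fst p) (snd p))"
    "continuous_on D (\<lambda>p. tangential_deriv \<Psi> (fst p) (snd p))"
    "continuous_on D (\<lambda>p. radial_deriv (d1 \<Psi>) (fst p) (snd p))"
    "continuous_on D (\<lambda>p. radial_deriv (d2 \<Psi>) (fst p) (snd p))"
    "continuous_on D (\<lambda>p. rpow (fst p) \<alpha>)"
    "continuous_on D (\<lambda>p. rpow (fst p) (2*\<alpha>))"
  unfolding D_def
  using C1_on_continuous_on(1)[OF C1_on_data(1)] C1_on_continuous_on(1)[OF C1_on_data(4)]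
    C1_on_continuous_on(1)[OF C1_on_data(5)] alpha
  by (auto intro!: continuous_on_rcis_compose continuous_on_radial_tangential_deriv C1_on_data
      continuous_on_rpow continuous_intros)

lemma continuous_on_pohozaev_radial_flux:
  "continuous_on ({0..<r} \<times> UNIV) (\<lambda>p. pohozaev_radial_flux (fst p) (snd p))"
  unfolding pohozaev_radial_flux_def scalar_radial_flux_def weight_flux_def spinor_radial_flux_def
  by (intro continuous_intros continuous_on_polar_data) simp

lemma continuous_on_pohozaev_radial_flux':
  "continuous_on ({0..<r} \<times> UNIV) (\<lambda>p. pohozaev_radial_flux' (fst p) (snd p))"
  unfolding pohozaev_radial_flux'_def scalar_radial_flux'_def weight_flux'_def spinor_radial_flux'_def
  by (intro continuous_intros continuous_on_polar_data)

lemma circle_integrands_polar: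
  fixes R t :: real
  assumes R: "0 < R" "R < r"
  defines "x \<equiv> rcis R t"
  shows "(normal_deriv u x)\<^sup>2 - 1/2 * (norm (grad u x))\<^sup>2
           = ((radial_deriv u R t)\<^sup>2 - (tangential_deriv u R t)\<^sup>2) / 2"
    and "inner (normal_deriv \<Psi> x) (clifford x (\<Psi> x)) = R * inner (radial_deriv \<Psi> R t) (clifford (cis t) (\<Psi> x))"
proof -
  have x: "x \<in> ball 0 r" using R by (simp add: x_def)
  have "(norm (grad u x))\<^sup>2 = (d1 u x)\<^sup>2 + (d2 u x)\<^sup>2" by (simp add: grad_def cmod_power2)
  also have "\<dots> = (radial_deriv u R t)\<^sup>2 + (tangential_deriv u R t)\<^sup>2"
    using sin_cos_squared_add[of t]
    unfolding radial_deriv_def tangential_deriv_def x_def[symmetric] real_scaleR_def by algebra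
  finally show "(normal_deriv u x)\<^sup>2 - 1/2 * (norm (grad u x))\<^sup>2
      = ((radial_deriv u R t)\<^sup>2 - (tangential_deriv u R t)\<^sup>2) / 2"
    using normal_deriv_rcis[OF R(1) C2_on_differentiable_at(1)[OF u x[unfolded x_def]]]
    by (simp add: x_def field_simps)
  show "inner (normal_deriv \<Psi> x) (clifford x (\<Psi> x)) = R * inner (radial_deriv \<Psi> R t) (clifford (cis t) (\<Psi> x))"
    using normal_deriv_rcis[OF R(1) C2_on_differentiable_at(1)[OF \<Psi> x[unfolded x_def]]]
    by (simp add: x_def clifford_rcis)
qed

lemma pohozaev_radial_flux_boundary:
  fixes R t :: real
  assumes R: "0 < R" "R < r"
  defines "x \<equiv> rcis R t"
  shows "pohozaev_radial_flux R t
       = R * (R * ((normal_deriv u x)\<^sup>2 - 1/2 * (norm (grad u x))\<^sup>2))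
         + R * (R * ((V x)\<^sup>2 * rpow (norm x) (2*\<alpha>) * exp (2 * u x)))
         - R * inner (normal_deriv \<Psi> x) (clifford x (\<Psi> x))"
proof -
  have x: "x \<in> ball 0 r" "norm x = R" using R by (simp_all add: x_def)
  have "dirac \<Psi> (rcis R t) = - (V x * rpow R \<alpha> * exp (u x)) *\<^sub>R \<Psi> (rcis R t)"
    using eq_\<Psi>[OF x(1)] x(2) by (simp add: x_def)
  from dirac_radial_tangential[OF C2_on_differentiable_at(1)[OF \<Psi> x(1)[unfolded x_def]] this]
  have dirac: "inner (radial_deriv \<Psi> R t) (clifford (cis t) (\<Psi> x))
      = V x * rpow R \<alpha> * exp (u x) * (norm (\<Psi> x))\<^sup>2
        + inner (clifford (\<i> * cis t) (tangential_deriv \<Psi> R t)) (\<Psi> x)"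
    by (simp add: x_def)
  show ?thesis
    unfolding circle_integrands_polar[OF R, of t, folded x_def] dirac x(2)
      pohozaev_radial_flux_def scalar_radial_flux_def weight_flux_def spinor_radial_flux_def x_def[symmetric]
    by (simp add: field_simps power2_eq_square)
qed

lemma integral_pohozaev_density:
  assumes R: "0 < R" "R < r"
  shows "integral (ball 0 R) pohozaev_density = integral {0..2*pi} (pohozaev_radial_flux R)"
proof (rule integral_ball_polar_divergence[where Gr = pohozaev_radial_flux' and H = pohozaev_angular_flux])
  have "cball 0 R \<subseteq> ball 0 r" using R by auto
  then show "continuous_on (cball 0 R) pohozaev_density"
    unfolding pohozaev_density_def[abs_def]
    by (intro continuous_intros continuous_on_subset[OF continuous_on_liouville_nonlinearity]
        continuous_on_subset[OF continuous_on_weight_variation])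
  have "{0..R} \<times> {0..2*pi} \<subseteq> {0..<r} \<times> UNIV" "{0<..<R} \<times> {0..2*pi} \<subseteq> {0..<r} \<times> UNIV"
    using R by auto
  then show "continuous_on ({0..R} \<times> {0..2*pi}) (\<lambda>(\<rho>, t). pohozaev_radial_flux \<rho> t)"
    "continuous_on ({0<..<R} \<times> {0..2*pi}) (\<lambda>(\<rho>, t). pohozaev_radial_flux' \<rho> t)"
    unfolding case_prod_beta'
    by (auto intro: continuous_on_subset[OF continuous_on_pohozaev_radial_flux]
        continuous_on_subset[OF continuous_on_pohozaev_radial_flux'])
  show "pohozaev_radial_flux 0 t = 0" for t
    by (simp add: pohozaev_radial_flux_def scalar_radial_flux_def weight_flux_def spinor_radial_flux_def)
  show "pohozaev_angular_flux \<rho> 0 = pohozaev_angular_flux \<rho> (2*pi)" for \<rho>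
    by (simp add: pohozaev_angular_flux_def scalar_angular_flux_def spinor_angular_flux_def
        radial_deriv_def tangential_deriv_def rcis_def)
next
  fix \<rho> t assume "\<rho> \<in> {0<..<R}"
  then have \<rho>: "0 < \<rho>" "\<rho> < r" using R by auto
  show "((\<lambda>\<rho>. pohozaev_radial_flux \<rho> t) has_real_derivative pohozaev_radial_flux' \<rho> t) (at \<rho>)"
    by (rule has_real_derivative_pohozaev_radial_flux[OF \<rho>])
  show "((\<lambda>t. pohozaev_angular_flux \<rho> t) has_real_derivative
          \<rho> * pohozaev_density (rcis \<rho> t) - pohozaev_radial_flux' \<rho> t) (at t within {0..2*pi})"
    by (rule has_real_derivative_pohozaev_angular_flux[OF \<rho>])
qed (rule R)

lemma integral_pohozaev_density_split:
  assumes "R < r"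
  shows "integral (ball 0 R) pohozaev_density
       = (1 + \<alpha>) * integral (ball 0 R) liouville_nonlinearity + integral (ball 0 R) weight_variation"
proof -
  have cball: "cball 0 R \<subseteq> ball 0 r" using assms by auto
  have F: "liouville_nonlinearity integrable_on ball 0 R" and W: "weight_variation integrable_on ball 0 R"
    using has_integral_ball_polar continuous_on_subset[OF continuous_on_liouville_nonlinearity cball]
      continuous_on_subset[OF continuous_on_weight_variation cball] by blast+
  have "integral (ball 0 R) pohozaev_density
      = integral (ball 0 R) (\<lambda>x. (1 + \<alpha>) * liouville_nonlinearity x) + integral (ball 0 R) weight_variation"
    unfolding pohozaev_density_def[abs_def]
    by (rule integral_add[OF integrable_cmul[OF F, unfolded real_scaleR_def] W])
  then show ?thesis by simp
qed

lemma integral_pohozaev_radial_flux: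
  assumes R: "0 < R" "R < r"
  shows "integral {0..2*pi} (pohozaev_radial_flux R)
       = R * circle_integral R (\<lambda>x. (normal_deriv u x)\<^sup>2 - 1/2 * (norm (grad u x))\<^sup>2)
         + R * circle_integral R (\<lambda>x. (V x)\<^sup>2 * rpow (norm x) (2*\<alpha>) * exp (2 * u x))
         - circle_integral R (\<lambda>x. inner (normal_deriv \<Psi> x) (clifford x (\<Psi> x)))"
proof -
  let ?L = "\<lambda>x. (normal_deriv u x)\<^sup>2 - 1/2 * (norm (grad u x))\<^sup>2"
  let ?E = "\<lambda>x. (V x)\<^sup>2 * rpow (norm x) (2*\<alpha>) * exp (2 * u x)"
  let ?B = "\<lambda>x. inner (normal_deriv \<Psi> x) (clifford x (\<Psi> x))"
  have L: "(\<lambda>t. R * ?L (rcis R t)) integrable_on {0..2*pi}"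
    and B: "(\<lambda>t. R * ?B (rcis R t)) integrable_on {0..2*pi}"
    and E: "(\<lambda>t. R * ?E (rcis R t)) integrable_on {0..2*pi}"
    unfolding circle_integrands_polar[OF R] using R
    by (auto intro!: integrable_on_slice[where S = "{0..<r} \<times> UNIV"] continuous_intros
        continuous_on_polar_data)
  have "integral {0..2*pi} (pohozaev_radial_flux R)
      = integral {0..2*pi} (\<lambda>t. R * (R * ?L (rcis R t)) + R * (R * ?E (rcis R t)) - R * ?B (rcis R t))"
    using pohozaev_radial_flux_boundary[OF R] by presburger
  also have "\<dots> = integral {0..2*pi} (\<lambda>t. R * (R * ?L (rcis R t)))
      + integral {0..2*pi} (\<lambda>t. R * (R * ?E (rcis R t))) - integral {0..2*pi} (\<lambda>t. R * ?B (rcis R t))"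
    using integrable_cmul[OF L, of R] integrable_cmul[OF E, of R] B
    by (simp add: integral_add integral_diff integrable_add)
  finally show ?thesis by (simp add: circle_integral_rcis)
qed

theorem pohozaev_identity:
  assumes R: "0 < R" "R < r"
  shows "R * circle_integral R (\<lambda>x. (normal_deriv u x)\<^sup>2 - 1/2 * (norm (grad u x))\<^sup>2)
       = (1 + \<alpha>) * integral (ball 0 R) liouville_nonlinearity
         - R * circle_integral R (\<lambda>x. (V x)\<^sup>2 * rpow (norm x) (2*\<alpha>) * exp (2 * u x))
         + circle_integral R (\<lambda>x. inner (normal_deriv \<Psi> x) (clifford x (\<Psi> x)))
         + integral (ball 0 R) weight_variation"
  using integral_pohozaev_density[OF R] integral_pohozaev_density_split[OF R(2)]
    integral_pohozaev_radial_flux[OF R]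
  by linarith

end

theorem proposition4p3:
  fixes \<alpha> \<beta> a b r R :: real
    and V u :: "complex \<Rightarrow> real"
    and \<Psi> :: "complex \<Rightarrow> complex \<times> complex"
  assumes alpha: "\<alpha> \<ge> 0"
    and beta: "0 < \<beta>" "\<beta> < 1"
    and V_reg: "C1_holder_on \<beta> (ball 0 r) V"
    and V_bounds: "0 < a" "\<forall>x\<in>ball 0 r. a \<le> V x \<and> V x \<le> b"
    and u_C2: "C2_on (ball 0 r) u"
    and Psi_C2: "C2_on (ball 0 r) \<Psi>"
    and eq_u: "\<forall>x\<in>ball 0 r. - laplacian u x =
        2 * (V x)\<^sup>2 * rpow (norm x) (2*\<alpha>) * exp (2 * u x)
        - V x * rpow (norm x) \<alpha> * exp (u x) * (norm (\<Psi> x))\<^sup>2"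
    and eq_Psi: "\<forall>x\<in>ball 0 r. dirac \<Psi> x = - (V x * rpow (norm x) \<alpha> * exp (u x)) *\<^sub>R \<Psi> x"
    and finite_energy: "(\<integral>\<^sup>+ x\<in>ball 0 r. ennreal (rpow (norm x) (2*\<alpha>) * exp (2 * u x)
        + (norm (\<Psi> x)) ^ 4) \<partial>lborel) < \<infinity>"
    and R: "0 < R" "R < r"
  shows "complex_of_real (R * circle_integral R
            (\<lambda>x. (normal_deriv u x)\<^sup>2 - 1/2 * (norm (grad u x))\<^sup>2))
       = complex_of_real ((1 + \<alpha>) * integral (ball 0 R)
            (\<lambda>x. 2 * (V x)\<^sup>2 * rpow (norm x) (2*\<alpha>) * exp (2 * u x)
                 - V x * rpow (norm x) \<alpha> * exp (u x) * (norm (\<Psi> x))\<^sup>2)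
          - R * circle_integral R (\<lambda>x. (V x)\<^sup>2 * rpow (norm x) (2*\<alpha>) * exp (2 * u x)))
       + 1/2 * circle_integral R
            (\<lambda>x. herm (normal_deriv \<Psi> x) (clifford x (\<Psi> x))
                 + herm (clifford x (\<Psi> x)) (normal_deriv \<Psi> x))
       + complex_of_real (integral (ball 0 R)
            (\<lambda>x. rpow (norm x) (2*\<alpha>) * exp (2 * u x) * (x \<bullet> grad (\<lambda>y. (V y)\<^sup>2) x)
                 - rpow (norm x) \<alpha> * exp (u x) * (norm (\<Psi> x))\<^sup>2 * (x \<bullet> grad V x)))"
proof -
  interpret super_liouville_solution \<alpha> r V u \<Psi>
    using alpha V_reg u_C2 Psi_C2 eq_u eq_Psi by unfold_locales (auto simp: C1_holder_on_def)
  have "1/2 * circle_integral R (\<lambda>x. herm (normal_deriv \<Psi> x) (clifford x (\<Psi> x))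
                                 + herm (clifford x (\<Psi> x)) (normal_deriv \<Psi> x))
      = complex_of_real (circle_integral R (\<lambda>x. inner (normal_deriv \<Psi> x) (clifford x (\<Psi> x))))"
    unfolding herm_add_herm_commute circle_integral_of_real
    using circle_integral_scaleR[of R 2 "\<lambda>x. inner (normal_deriv \<Psi> x) (clifford x (\<Psi> x))"] by simp
  with pohozaev_identity[OF R] show ?thesis
    unfolding liouville_nonlinearity_def[abs_def] weight_variation_def[abs_def]
    by (simp flip: of_real_add of_real_diff)
qed

end
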